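(* Let $c_0,\delta,\tilde\beta$ be positive constants, $m$ a real constant (the cases $m=\tfrac12$ and $m=1$ correspond to cylindrical and spherical geometry), and $F$ a smooth real function with $F''\neq 0$. Consider the generalized KZK equation $$E:=c_0^4\Big(p_{rr}+\frac{2m\,p_r}{r}\Big)+\delta p_{ttt}+\tilde\beta\,F(p)_{tt}-2c_0^3p_{zt}=0$$ for $p(r,z,t)$, $r>0$. A function $\Lambda(r,z,t,p,p_r,p_z,p_t)$ is a multiplier, i.e. $\mathcal{E}_p[\Lambda E]=0$ identically, if and only if $\Lambda=\phi(r,z)+t\,\psi(r,z)$ with $$\phi_{rr}-\frac{2m}{r}\phi_r+\frac{2m}{r^2}\phi=\frac{2}{c_0}\psi_z,\qquad \psi_{rr}-\frac{2m}{r}\psi_r+\frac{2m}{r^2}\psi=0.$$ For any such $\phi,\psi$, every smooth solution $p$ of $E=0$ satisfies $\partial_tT^t+\partial_rT^r+\partial_zT^z=0$ with $$T^t=(\phi+t\psi)\big(\delta p_{tt}+\tilde\beta F'(p)p_t-2c_0^3p_z\big)-\psi\big(\delta p_t+\tilde\beta F(p)\big),$$ $$T^r=c_0^4\Big((\phi+t\psi)\big(p_r+\tfrac{2mp}{r}\big)-p(\phi_r+t\psi_r)\Big),\qquad T^z=2c_0^3p\psi.$$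
   Context: $\mathcal{E}_p$ is the Euler (variational) operator with respect to $p$ on the jet space in the variables $(r,z,t)$, built from total derivatives; $\Lambda E$ is a total divergence iff $\mathcal{E}_p[\Lambda E]=0$ identically. Subscripts denote partial derivatives. *)

theory Defs
  imports "HOL-Analysis.Analysis"
begin

definition pdir :: "'a::euclidean_space \<Rightarrow> ('a \<Rightarrow> real) \<Rightarrow> 'a \<Rightarrow> real" where
  "pdir i f x = deriv (\<lambda>s. f (x + s *\<^sub>R i)) 0"

fun iterpd :: "'a::euclidean_space list \<Rightarrow> ('a \<Rightarrow> real) \<Rightarrow> 'a \<Rightarrow> real" where
  "iterpd [] f = f"
| "iterpd (i # is) f = pdir i (iterpd is f)"

definition Cinf_on :: "'a::euclidean_space set \<Rightarrow> ('a \<Rightarrow> real) \<Rightarrow> bool" where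
  "Cinf_on U f \<longleftrightarrow> (\<forall>is. set is \<subseteq> Basis \<longrightarrow>
      continuous_on U (iterpd is f) \<and>
      (\<forall>i\<in>Basis. \<forall>x\<in>U. (\<lambda>s. iterpd is f (x + s *\<^sub>R i)) differentiable (at 0)))"

text \<open>A point is (r,z,t). A jet assigns to each multi-index (a,b,c) the value of
  the derivative of p of order a in r, b in z, c in t. A differential function
  is a function of the point and of the jet.\<close>

type_synonym pt = "real \<times> real \<times> real"
type_synonym jet = "nat \<times> nat \<times> nat \<Rightarrow> real"
type_synonym dfun = "pt \<Rightarrow> jet \<Rightarrow> real"

definition jord :: "nat \<times> nat \<times> nat \<Rightarrow> nat" where
  "jord J = (case J of (a, b, c) \<Rightarrow> a + b + c)"

definition depends_upto :: "nat \<Rightarrow> dfun \<Rightarrow> bool" where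
  "depends_upto n L \<longleftrightarrow> (\<forall>x u v. (\<forall>J. jord J \<le> n \<longrightarrow> u J = v J) \<longrightarrow> L x u = L x v)"

definition dord :: "dfun \<Rightarrow> nat" where
  "dord L = (LEAST n. depends_upto n L)"

definition pu :: "nat \<times> nat \<times> nat \<Rightarrow> dfun \<Rightarrow> dfun" where
  "pu J L x u = deriv (\<lambda>s. L x (u(J := s))) (u J)"

definition px :: "nat \<Rightarrow> dfun \<Rightarrow> dfun" where
  "px i L x u = (case x of (r, z, t) \<Rightarrow>
     if i = 0 then deriv (\<lambda>s. L (s, z, t) u) r
     else if i = 1 then deriv (\<lambda>s. L (r, s, t) u) z
     else deriv (\<lambda>s. L (r, z, s) u) t)"

definition shift :: "nat \<Rightarrow> nat \<times> nat \<times> nat \<Rightarrow> nat \<times> nat \<times> nat" where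
  "shift i J = (case J of (a, b, c) \<Rightarrow>
     if i = 0 then (Suc a, b, c) else if i = 1 then (a, Suc b, c) else (a, b, Suc c))"

text \<open>Total derivative D_r (i=0), D_z (i=1), D_t (i=2).\<close>
definition Dtot :: "nat \<Rightarrow> dfun \<Rightarrow> dfun" where
  "Dtot i L x u = px i L x u + (\<Sum>J\<in>{J. jord J \<le> dord L}. u (shift i J) * pu J L x u)"

definition Dmulti :: "nat \<times> nat \<times> nat \<Rightarrow> dfun \<Rightarrow> dfun" where
  "Dmulti J L = (case J of (a, b, c) \<Rightarrow> (Dtot 0 ^^ a) ((Dtot 1 ^^ b) ((Dtot 2 ^^ c) L)))"

definition euler :: "dfun \<Rightarrow> dfun" where
  "euler L x u = (\<Sum>J\<in>{J. jord J \<le> dord L}. (-1) ^ jord J * Dmulti J (pu J L) x u)"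

definition kzkE :: "real \<Rightarrow> real \<Rightarrow> real \<Rightarrow> real \<Rightarrow> (real \<Rightarrow> real) \<Rightarrow> dfun" where
  "kzkE c0 dl bt m F = (\<lambda>x u.
      c0 ^ 4 * (u (2, 0, 0) + 2 * m * u (1, 0, 0) / fst x) + dl * u (0, 0, 3)
      + bt * Dtot 2 (Dtot 2 (\<lambda>y v. F (v (0, 0, 0)))) x u
      - 2 * c0 ^ 3 * u (0, 1, 1))"

definition is_multiplier ::
  "real \<Rightarrow> real \<Rightarrow> real \<Rightarrow> real \<Rightarrow> (real \<Rightarrow> real) \<Rightarrow>
   (pt \<times> (real \<times> real \<times> real \<times> real) \<Rightarrow> real) \<Rightarrow> bool" where
  "is_multiplier c0 dl bt m F Lam \<longleftrightarrow>
     (\<forall>x u. fst x > 0 \<longrightarrow>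
        euler (\<lambda>y v. Lam (y, (v (0,0,0), v (1,0,0), v (0,1,0), v (0,0,1))) * kzkE c0 dl bt m F y v) x u = 0)"

definition d_r :: "(pt \<Rightarrow> real) \<Rightarrow> pt \<Rightarrow> real" where
  "d_r f x = (case x of (r, z, t) \<Rightarrow> deriv (\<lambda>s. f (s, z, t)) r)"
definition d_z :: "(pt \<Rightarrow> real) \<Rightarrow> pt \<Rightarrow> real" where
  "d_z f x = (case x of (r, z, t) \<Rightarrow> deriv (\<lambda>s. f (r, s, t)) z)"
definition d_t :: "(pt \<Rightarrow> real) \<Rightarrow> pt \<Rightarrow> real" where
  "d_t f x = (case x of (r, z, t) \<Rightarrow> deriv (\<lambda>s. f (r, z, s)) t)"

definition d2_r :: "(real \<times> real \<Rightarrow> real) \<Rightarrow> real \<times> real \<Rightarrow> real" where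
  "d2_r f w = (case w of (r, z) \<Rightarrow> deriv (\<lambda>s. f (s, z)) r)"
definition d2_z :: "(real \<times> real \<Rightarrow> real) \<Rightarrow> real \<times> real \<Rightarrow> real" where
  "d2_z f w = (case w of (r, z) \<Rightarrow> deriv (\<lambda>s. f (r, s)) z)"

end

theory Submission
  imports Defs
begin

text \<open>
  A multiplier \<open>\<Lambda>(r, z, t, p, p\<^sub>r, p\<^sub>z, p\<^sub>t)\<close> enters \<open>\<E>\<^sub>p[\<Lambda> E]\<close> through the
  highest jets affinely: the coefficients of \<open>p\<^sub>t\<^sub>t\<^sub>t\<^sub>t\<close>, \<open>p\<^sub>r\<^sub>t\<^sub>t\<^sub>t\<close>, \<open>p\<^sub>z\<^sub>t\<^sub>t\<^sub>t\<close> are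
  \<open>-2\<delta>\<close> times \<open>\<partial>\<Lambda>/\<partial>p\<^sub>t\<close>, \<open>\<partial>\<Lambda>/\<partial>p\<^sub>r\<close>, \<open>\<partial>\<Lambda>/\<partial>p\<^sub>z\<close>, and once these vanish the
  coefficient of \<open>p\<^sub>r\<^sub>r\<close> is \<open>2 c\<^sub>0\<^sup>4 \<partial>\<Lambda>/\<partial>p\<close>. So \<open>\<Lambda> = \<lambda>(r, z, t)\<close>, and then
  \<open>\<E>\<^sub>p[\<lambda> E]\<close> is the adjoint
  \<open>c\<^sub>0\<^sup>4 (\<lambda>\<^sub>r\<^sub>r - 2m\<lambda>\<^sub>r/r + 2m\<lambda>/r\<^sup>2) - \<delta> \<lambda>\<^sub>t\<^sub>t\<^sub>t + \<beta> F'(p) \<lambda>\<^sub>t\<^sub>t - 2 c\<^sub>0\<^sup>3 \<lambda>\<^sub>z\<^sub>t\<close>.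
  As \<open>F'' \<noteq> 0\<close>, \<open>F'(p)\<close> takes two different values, which forces \<open>\<lambda>\<^sub>t\<^sub>t = 0\<close>, i.e.
  \<open>\<lambda> = \<phi> + t\<psi>\<close>; the coefficients of \<open>t\<^sup>0\<close> and \<open>t\<^sup>1\<close> are the two radial equations.
  For the conservation law, the divergence of \<open>(T\<^sup>t, T\<^sup>r, T\<^sup>z)\<close> equals
  \<open>(\<phi> + t\<psi>) E - c\<^sub>0\<^sup>4 p (B\<phi> + t B\<psi>) + 2 c\<^sub>0\<^sup>3 p \<psi>\<^sub>z\<close>, with \<open>B\<close> the radial operator,
  and the last two terms cancel by the radial equations.
\<close>

section \<open>Total derivatives and the Euler operator\<close>

definition depends_on :: "(nat \<times> nat \<times> nat) set \<Rightarrow> dfun \<Rightarrow> bool" where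
  "depends_on S M \<longleftrightarrow> (\<forall>x u v. (\<forall>J\<in>S. u J = v J) \<longrightarrow> M x u = M x v)"

definition shift_set :: "nat \<Rightarrow> (nat \<times> nat \<times> nat) set \<Rightarrow> (nat \<times> nat \<times> nat) set" where
  "shift_set i S = S \<union> shift i ` S"

lemma depends_on_upd: "depends_on S M \<Longrightarrow> K \<notin> S \<Longrightarrow> M x (u(K := s)) = M x u"
  unfolding depends_on_def by (metis fun_upd_other)

lemma depends_on_mono: "depends_on S M \<Longrightarrow> S \<subseteq> S' \<Longrightarrow> depends_on S' M"
  unfolding depends_on_def by blast

lemma finite_shift_set [simp]: "finite S \<Longrightarrow> finite (shift_set i S)"
  by (simp add: shift_set_def)

lemma shift_inj: "shift i J = shift i J' \<Longrightarrow> J = J'"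
  by (cases J; cases J') (auto simp: shift_def split: if_splits)

lemma shift_neq: "shift i J \<noteq> J"
  by (cases J) (auto simp: shift_def)

lemma finite_jord_le: "finite {J. jord J \<le> n}"
proof (rule finite_subset)
  show "{J. jord J \<le> n} \<subseteq> {..n} \<times> {..n} \<times> {..n}"
    by (auto simp: jord_def)
qed auto

lemma depends_upto_dord:
  assumes "finite S" "depends_on S M"
  shows "depends_upto (dord M) M"
proof -
  have "depends_upto (\<Sum>J\<in>S. jord J) M"
    using assms member_le_sum[of _ S jord] unfolding depends_upto_def depends_on_def by blast
  then show ?thesis
    unfolding dord_def by (rule LeastI)
qed

lemma pu_eq_0_if_not_depends: "depends_on S M \<Longrightarrow> J \<notin> S \<Longrightarrow> pu J M = (\<lambda>x u. 0)"
  unfolding pu_def by (simp add: depends_on_upd)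

lemma pu_eq_0_above_order:
  assumes "depends_upto n M" "\<not> jord J \<le> n"
  shows "pu J M = (\<lambda>x u. 0)"
proof (intro ext)
  fix x u
  have "M x (u(J := s)) = M x u" for s
    using assms unfolding depends_upto_def by (metis fun_upd_other)
  then show "pu J M x u = 0"
    unfolding pu_def by simp
qed

lemma pu_eqI: "((\<lambda>s. L x (u(J := s))) has_real_derivative D) (at (u J)) \<Longrightarrow> pu J L x u = D"
  unfolding pu_def by (rule DERIV_imp_deriv)

lemma has_real_derivative_pu:
  "(\<lambda>s. L x (u(J := s))) differentiable (at (u J)) \<Longrightarrow>
    ((\<lambda>s. L x (u(J := s))) has_real_derivative pu J L x u) (at (u J))"
  unfolding pu_def by (simp add: DERIV_deriv_iff_real_differentiable)

lemma pu_affine: "(\<And>s. M x (u(J := s)) = M x u + (s - u J) * c) \<Longrightarrow> pu J M x u = c"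
  unfolding pu_def by (auto intro!: DERIV_imp_deriv derivative_eq_intros)

lemma pu_mult:
  assumes "(\<lambda>s. A x (u(J := s))) differentiable (at (u J))"
    and "(\<lambda>s. B x (u(J := s))) differentiable (at (u J))"
  shows "pu J (\<lambda>x u. A x u * B x u) x u = pu J A x u * B x u + A x u * pu J B x u"
proof (rule pu_eqI)
  from DERIV_mult[OF has_real_derivative_pu[of A, OF assms(1)] has_real_derivative_pu[of B, OF assms(2)]]
  show "((\<lambda>s. A x (u(J := s)) * B x (u(J := s)))
      has_real_derivative pu J A x u * B x u + A x u * pu J B x u) (at (u J))"
    by (simp add: mult.commute)
qed

lemma pu_mult_indep:
  assumes "depends_on S A" "J \<notin> S" "(\<lambda>s. B x (u(J := s))) differentiable (at (u J))"
  shows "pu J (\<lambda>x u. A x u * B x u) x u = A x u * pu J B x u"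
  using pu_mult[of A x u J B] assms depends_on_upd[OF assms(1,2)] pu_eq_0_if_not_depends[OF assms(1,2)]
  by simp

lemma pu_mult_const:
  assumes "(\<lambda>s. M x (u(J := s))) differentiable (at (u J))"
  shows "pu J (\<lambda>x u. M x u * c) x u = pu J M x u * c"
  using pu_mult[of M x u J "\<lambda>x u. c"] assms by (simp add: pu_def)

lemma depends_on_mult: "depends_on S A \<Longrightarrow> depends_on S B \<Longrightarrow> depends_on S (\<lambda>x u. A x u * B x u)"
  unfolding depends_on_def by metis

lemma Dtot_eq_sum:
  assumes "finite S" "depends_on S M"
  shows "Dtot i M x u = px i M x u + (\<Sum>J\<in>S. u (shift i J) * pu J M x u)"
proof -
  let ?D = "{J. jord J \<le> dord M}"
  have zero_outside: "u (shift i J) * pu J M x u = 0" if "J \<notin> ?D \<inter> S" for J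
    using that pu_eq_0_if_not_depends[OF assms(2), of J] pu_eq_0_above_order[OF depends_upto_dord[OF assms], of J]
    by auto
  have "(\<Sum>J\<in>?D. u (shift i J) * pu J M x u) = (\<Sum>J\<in>?D \<inter> S. u (shift i J) * pu J M x u)"
    by (rule sum.mono_neutral_right[OF finite_jord_le]) (use zero_outside in blast)+
  also have "\<dots> = (\<Sum>J\<in>S. u (shift i J) * pu J M x u)"
    by (rule sum.mono_neutral_left[OF assms(1)]) (use zero_outside in blast)+
  finally show ?thesis unfolding Dtot_def by simp
qed

lemma Dtot_zero: "Dtot i (\<lambda>x u. 0) = (\<lambda>x u. 0)"
  by (intro ext) (auto simp: Dtot_def px_def pu_def split: prod.splits)

lemma Dmulti_zero: "Dmulti J (\<lambda>x u. 0) = (\<lambda>x u. 0)"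
proof -
  have "(Dtot i ^^ n) (\<lambda>x u. 0) = (\<lambda>x u. 0)" for i n
    by (induction n) (simp_all add: Dtot_zero)
  then show ?thesis by (cases J) (simp add: Dmulti_def)
qed

lemma euler_eq_sum:
  assumes "finite S" "depends_on S L"
  shows "euler L x u = (\<Sum>J\<in>S. (-1) ^ jord J * Dmulti J (pu J L) x u)"
proof -
  let ?D = "{J. jord J \<le> dord L}"
  have zero_outside: "(-1) ^ jord J * Dmulti J (pu J L) x u = 0" if "J \<notin> ?D \<inter> S" for J
    using that pu_eq_0_if_not_depends[OF assms(2), of J] pu_eq_0_above_order[OF depends_upto_dord[OF assms], of J]
    by (auto simp: Dmulti_zero)
  have "(\<Sum>J\<in>?D. (-1) ^ jord J * Dmulti J (pu J L) x u)
      = (\<Sum>J\<in>?D \<inter> S. (-1) ^ jord J * Dmulti J (pu J L) x u)"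
    by (rule sum.mono_neutral_right[OF finite_jord_le]) (use zero_outside in blast)+
  also have "\<dots> = (\<Sum>J\<in>S. (-1) ^ jord J * Dmulti J (pu J L) x u)"
    by (rule sum.mono_neutral_left[OF assms(1)]) (use zero_outside in blast)+
  finally show ?thesis unfolding euler_def by simp
qed

lemma depends_on_px:
  assumes "depends_on S M"
  shows "depends_on S (px i M)"
  unfolding depends_on_def
proof (intro allI impI)
  fix x :: pt and u v :: jet
  assume "\<forall>J\<in>S. u J = v J"
  then have eq: "M y u = M y v" for y
    using assms unfolding depends_on_def by blast
  obtain r z t where x: "x = (r, z, t)"
    by (cases x)
  have "(\<lambda>s. M (s, z, t) u) = (\<lambda>s. M (s, z, t) v)" "(\<lambda>s. M (r, s, t) u) = (\<lambda>s. M (r, s, t) v)"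
    "(\<lambda>s. M (r, z, s) u) = (\<lambda>s. M (r, z, s) v)"
    by (intro ext eq)+
  then show "px i M x u = px i M x v"
    unfolding px_def x by (simp only: prod.case)
qed

lemma depends_on_pu:
  assumes "depends_on S M"
  shows "depends_on S (pu J M)"
proof (cases "J \<in> S")
  case True
  show ?thesis
    unfolding depends_on_def
  proof (intro allI impI)
    fix x :: pt and u v :: jet
    assume uv: "\<forall>K\<in>S. u K = v K"
    then have "\<forall>K\<in>S. (u(J := s)) K = (v(J := s)) K" for s
      by simp
    with assms have "M x (u(J := s)) = M x (v(J := s))" for s
      unfolding depends_on_def by blast
    with uv True show "pu J M x u = pu J M x v"
      unfolding pu_def by simp
  qed
next
  case False
  then show ?thesis
    using pu_eq_0_if_not_depends[OF assms] by (simp add: depends_on_def)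
qed

lemma depends_on_Dtot:
  assumes "finite S" "depends_on S M"
  shows "depends_on (shift_set i S) (Dtot i M)"
  unfolding depends_on_def
proof (intro allI impI)
  fix x :: pt and u v :: jet
  assume uv: "\<forall>J\<in>shift_set i S. u J = v J"
  then have uv_S: "\<forall>J\<in>S. u J = v J"
    by (auto simp: shift_set_def)
  have "px i M x u = px i M x v"
    using depends_on_px[OF assms(2)] uv_S unfolding depends_on_def by blast
  moreover have "pu J M x u = pu J M x v" for J
    using depends_on_pu[OF assms(2)] uv_S unfolding depends_on_def by blast
  moreover have "u (shift i J) = v (shift i J)" if "J \<in> S" for J
    using uv that by (auto simp: shift_set_def)
  ultimately show "Dtot i M x u = Dtot i M x v"
    by (simp add: Dtot_eq_sum[OF assms])
qed

lemma depends_on_Dtot_pow: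
  assumes "finite S" "depends_on S M"
  shows "finite ((shift_set i ^^ n) S) \<and> depends_on ((shift_set i ^^ n) S) ((Dtot i ^^ n) M)"
  by (induction n) (auto simp: assms depends_on_Dtot)

lemma Dtot_upd_shift:
  assumes "finite S" "depends_on S M" "shift i J0 \<notin> S"
  shows "Dtot i M x (u(shift i J0 := s)) = Dtot i M x u + (s - u (shift i J0)) * pu J0 M x u"
proof -
  let ?K = "shift i J0" and ?S = "insert J0 S"
  have dep: "depends_on ?S M"
    using assms(2) by (rule depends_on_mono) auto
  have K: "?K \<notin> ?S"
    using assms(3) shift_neq[of i J0] by auto
  have upd: "(u(?K := s)) (shift i J) * pu J M x u
      = u (shift i J) * pu J M x u + (if J = J0 then (s - u ?K) * pu J0 M x u else 0)" for J
    using shift_inj[of i J J0] by (auto simp: algebra_simps)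
  have "Dtot i M x (u(?K := s)) = px i M x u + (\<Sum>J\<in>?S. (u(?K := s)) (shift i J) * pu J M x u)"
    using depends_on_upd[OF depends_on_px[OF dep] K] depends_on_upd[OF depends_on_pu[OF dep] K]
    by (simp add: Dtot_eq_sum[OF _ dep] assms(1) del: fun_upd_apply)
  also have "\<dots> = Dtot i M x u + (s - u ?K) * pu J0 M x u"
    by (simp only: upd sum.distrib) (simp add: Dtot_eq_sum[OF _ dep] assms(1))
  finally show ?thesis .
qed

lemma pu_Dtot_shift:
  assumes "finite S" "depends_on S M" "shift i J0 \<notin> S"
  shows "pu (shift i J0) (Dtot i M) x u = pu J0 M x u"
  by (rule pu_eqI) (auto simp: Dtot_upd_shift[OF assms] intro!: derivative_eq_intros)

definition agree_pos :: "dfun \<Rightarrow> dfun \<Rightarrow> bool" where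
  "agree_pos M M' \<longleftrightarrow> (\<forall>x u. fst x > 0 \<longrightarrow> M x u = M' x u)"

lemma agree_posD: "agree_pos M M' \<Longrightarrow> r > 0 \<Longrightarrow> M (r, z, t) u = M' (r, z, t) u"
  unfolding agree_pos_def by auto

lemma eventually_pos_nhds: "(r::real) > 0 \<Longrightarrow> eventually (\<lambda>s. s > 0) (nhds r)"
  using eventually_nhds_in_open[of "{0<..}" r] by simp

lemma px_agree_pos: "agree_pos M M' \<Longrightarrow> fst x > 0 \<Longrightarrow> px i M x u = px i M' x u"
proof -
  assume agree: "agree_pos M M'" and x: "fst x > 0"
  obtain r z t where x_eq: "x = (r, z, t)" and r: "r > 0"
    using x by (cases x) auto
  have "deriv (\<lambda>s. M (s, z, t) u) r = deriv (\<lambda>s. M' (s, z, t) u) r"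
    using eventually_pos_nhds[OF r] agree
    by (intro deriv_cong_ev) (auto simp: agree_pos_def elim: eventually_mono)
  with agree r show ?thesis
    by (simp add: px_def x_eq agree_pos_def)
qed

lemma agree_pos_pu: "agree_pos M M' \<Longrightarrow> agree_pos (pu J M) (pu J M')"
  unfolding agree_pos_def pu_def by simp

lemma agree_pos_Dtot:
  assumes "finite S" "depends_on S M" "depends_on S M'" "agree_pos M M'"
  shows "agree_pos (Dtot i M) (Dtot i M')"
  using assms(4) agree_pos_pu[OF assms(4)] unfolding agree_pos_def
  by (auto simp: Dtot_eq_sum[OF assms(1,2)] Dtot_eq_sum[OF assms(1,3)] px_agree_pos[OF assms(4)])

lemma agree_pos_Dtot_pow:
  assumes "finite S" "depends_on S M" "depends_on S M'" "agree_pos M M'"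
  shows "agree_pos ((Dtot i ^^ n) M) ((Dtot i ^^ n) M')"
proof (induction n)
  case (Suc n)
  have "agree_pos (Dtot i ((Dtot i ^^ n) M)) (Dtot i ((Dtot i ^^ n) M'))"
    using depends_on_Dtot_pow[OF assms(1,2), of n i] depends_on_Dtot_pow[OF assms(1,3), of n i] Suc.IH
    by (intro agree_pos_Dtot[of "(shift_set i ^^ n) S"]) auto
  then show ?case by simp
qed (use assms(4) in simp)

lemma agree_pos_Dmulti:
  assumes "finite S" "depends_on S M" "depends_on S M'" "agree_pos M M'"
  shows "agree_pos (Dmulti (a, b, c) M) (Dmulti (a, b, c) M')"
proof -
  let ?S2 = "(shift_set 2 ^^ c) S" and ?S1 = "(shift_set 1 ^^ b) ((shift_set 2 ^^ c) S)"
  note dep2 = depends_on_Dtot_pow[OF assms(1,2), where i=2 and n=c]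
    depends_on_Dtot_pow[OF assms(1,3), where i=2 and n=c]
  note dep1 = depends_on_Dtot_pow[of ?S2 _ b 1]
  have "agree_pos ((Dtot 2 ^^ c) M) ((Dtot 2 ^^ c) M')"
    by (rule agree_pos_Dtot_pow[OF assms])
  then have "agree_pos ((Dtot 1 ^^ b) ((Dtot 2 ^^ c) M)) ((Dtot 1 ^^ b) ((Dtot 2 ^^ c) M'))"
    using dep2 by (rule_tac agree_pos_Dtot_pow[of ?S2]) auto
  then have "agree_pos ((Dtot 0 ^^ a) ((Dtot 1 ^^ b) ((Dtot 2 ^^ c) M)))
                       ((Dtot 0 ^^ a) ((Dtot 1 ^^ b) ((Dtot 2 ^^ c) M')))"
    using dep2 dep1 by (rule_tac agree_pos_Dtot_pow[of ?S1]) auto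
  then show ?thesis by (simp add: Dmulti_def)
qed

lemma agree_pos_euler:
  assumes "finite S" "depends_on S L" "depends_on S L'" "agree_pos L L'"
  shows "agree_pos (euler L) (euler L')"
proof -
  have "agree_pos (Dmulti J (pu J L)) (Dmulti J (pu J L'))" for J
    using assms by (cases J) (simp add: agree_pos_Dmulti depends_on_pu agree_pos_pu)
  then show ?thesis
    unfolding agree_pos_def by (simp add: euler_eq_sum[OF assms(1,2)] euler_eq_sum[OF assms(1,3)])
qed

lemma iterpd_append: "iterpd (ks @ js) f = iterpd ks (iterpd js f)"
  by (induction ks) auto

lemma Cinf_on_continuous: "Cinf_on U f \<Longrightarrow> continuous_on U f"
  unfolding Cinf_on_def by (drule spec[of _ "[]"]) simp

lemma Cinf_on_has_pdir:
  assumes "Cinf_on U f" "i \<in> Basis" "x \<in> U"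
  shows "((\<lambda>s. f (x + (s - a) *\<^sub>R i)) has_real_derivative pdir i f x) (at a)"
proof -
  have "(\<lambda>s. f (x + s *\<^sub>R i)) differentiable (at 0)"
    using assms(1)[unfolded Cinf_on_def, rule_format, of "[]"] assms(2,3) by simp
  then have "((\<lambda>s. f (x + s *\<^sub>R i)) has_real_derivative pdir i f x) (at 0)"
    unfolding pdir_def by (simp add: DERIV_deriv_iff_real_differentiable)
  then show ?thesis
    using DERIV_shift[where f = "\<lambda>s. f (x + s *\<^sub>R i)" and x = a and z = "- a"] by simp
qed

lemma Cinf_on_pdir:
  assumes f: "Cinf_on U f" and i: "i \<in> Basis"
  shows "Cinf_on U (pdir i f)"
  unfolding Cinf_on_def
proof (intro allI impI)
  fix ks :: "'a list"
  assume "set ks \<subseteq> Basis"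
  with i have "set (ks @ [i]) \<subseteq> Basis"
    by simp
  with f show "continuous_on U (iterpd ks (pdir i f)) \<and>
      (\<forall>j\<in>Basis. \<forall>x\<in>U. (\<lambda>s. iterpd ks (pdir i f) (x + s *\<^sub>R j)) differentiable at 0)"
    unfolding Cinf_on_def by (auto simp: iterpd_append simp del: set_append dest!: spec[of _ "ks @ [i]"])
qed

lemma iterpd_pullback:
  fixes f :: "'a::euclidean_space \<Rightarrow> real" and T :: "'b::euclidean_space \<Rightarrow> 'a"
  assumes lin: "\<And>y s i. T (y + s *\<^sub>R i) = T y + s *\<^sub>R T i"
  shows "iterpd ks (\<lambda>y. f (c + T y)) = (\<lambda>y. iterpd (map T ks) f (c + T y))"
proof (induction ks)
  case (Cons i ks)
  show ?case
    by (intro ext) (simp add: Cons pdir_def lin add.assoc)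
qed simp

lemma Cinf_on_pullback:
  fixes f :: "'a::euclidean_space \<Rightarrow> real" and T :: "'b::euclidean_space \<Rightarrow> 'a"
  assumes lin: "\<And>y s i. T (y + s *\<^sub>R i) = T y + s *\<^sub>R T i"
    and cont: "continuous_on UNIV T" and basis: "\<And>i. i \<in> Basis \<Longrightarrow> T i \<in> Basis"
    and f: "Cinf_on U f"
  shows "Cinf_on {y. c + T y \<in> U} (\<lambda>y. f (c + T y))"
  unfolding Cinf_on_def
proof (intro allI impI conjI ballI)
  fix ks :: "'b list"
  assume ks: "set ks \<subseteq> Basis"
  then have ks': "set (map T ks) \<subseteq> Basis"
    using basis by auto
  have "continuous_on {y. c + T y \<in> U} (\<lambda>y. c + T y)"
    by (intro continuous_intros continuous_on_subset[OF cont]) auto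
  then have "continuous_on {y. c + T y \<in> U} (\<lambda>y. iterpd (map T ks) f (c + T y))"
    using f[unfolded Cinf_on_def, rule_format, OF ks'] by (auto intro: continuous_on_compose2)
  then show "continuous_on {y. c + T y \<in> U} (iterpd ks (\<lambda>y. f (c + T y)))"
    by (simp add: iterpd_pullback[OF lin])
  fix i y :: 'b
  assume "i \<in> Basis" "y \<in> {y. c + T y \<in> U}"
  then have "(\<lambda>s. iterpd (map T ks) f ((c + T y) + s *\<^sub>R T i)) differentiable (at 0)"
    using f[unfolded Cinf_on_def, rule_format, OF ks'] basis by auto
  then show "(\<lambda>s. iterpd ks (\<lambda>y. f (c + T y)) (y + s *\<^sub>R i)) differentiable (at 0)"
    by (simp add: iterpd_pullback[OF lin] lin add.assoc)
qed

lemma Basis_real3: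
  "(1, 0, 0) \<in> (Basis :: pt set)" "(0, 1, 0) \<in> (Basis :: pt set)" "(0, 0, 1) \<in> (Basis :: pt set)"
  by (auto simp: Basis_prod_def zero_prod_def)

lemma Basis_real2: "(1, 0) \<in> (Basis :: (real \<times> real) set)" "(0, 1) \<in> (Basis :: (real \<times> real) set)"
  by (auto simp: Basis_prod_def zero_prod_def)

lemma deriv_eq_pdir: "deriv f = pdir (1::real) f"
  by (intro ext) (simp add: pdir_def deriv_shift_0' comp_def)

lemma d_r_eq_pdir: "d_r g = pdir (1, 0, 0) g"
  by (intro ext) (auto simp: pdir_def d_r_def deriv_shift_0' comp_def)

lemma d_z_eq_pdir: "d_z g = pdir (0, 1, 0) g"
  by (intro ext) (auto simp: pdir_def d_z_def deriv_shift_0' comp_def)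

lemma d_t_eq_pdir: "d_t g = pdir (0, 0, 1) g"
  by (intro ext) (auto simp: pdir_def d_t_def deriv_shift_0' comp_def)

lemma d2_r_eq_pdir: "d2_r g = pdir (1, 0) g"
  by (intro ext) (auto simp: pdir_def d2_r_def deriv_shift_0' comp_def)

lemma d2_z_eq_pdir: "d2_z g = pdir (0, 1) g"
  by (intro ext) (auto simp: pdir_def d2_z_def deriv_shift_0' comp_def)

lemma Cinf_on_deriv: "Cinf_on U f \<Longrightarrow> Cinf_on U (deriv f)"
  by (simp add: deriv_eq_pdir Cinf_on_pdir)

lemma Cinf_on_d_r: "Cinf_on U g \<Longrightarrow> Cinf_on U (d_r g)"
  and Cinf_on_d_z: "Cinf_on U g \<Longrightarrow> Cinf_on U (d_z g)"
  and Cinf_on_d_t: "Cinf_on U g \<Longrightarrow> Cinf_on U (d_t g)"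
  by (simp_all add: d_r_eq_pdir d_z_eq_pdir d_t_eq_pdir Cinf_on_pdir Basis_real3)

lemma Cinf_on_d2_r: "Cinf_on U f \<Longrightarrow> Cinf_on U (d2_r f)"
  and Cinf_on_d2_z: "Cinf_on U f \<Longrightarrow> Cinf_on U (d2_z f)"
  by (simp_all add: d2_r_eq_pdir d2_z_eq_pdir Cinf_on_pdir Basis_real2)

lemma Cinf_on_has_deriv: "Cinf_on U f \<Longrightarrow> x \<in> U \<Longrightarrow> (f has_real_derivative deriv f x) (at x)"
  using Cinf_on_has_pdir[of U f 1 x x] by (simp add: deriv_eq_pdir)

lemma Cinf_on_derivs:
  assumes "Cinf_on UNIV F"
  shows "(F has_real_derivative deriv F x) (at x)"
    "(deriv F has_real_derivative deriv (deriv F) x) (at x)"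
    "(deriv (deriv F) has_real_derivative deriv (deriv (deriv F)) x) (at x)"
  using Cinf_on_has_deriv[OF assms] Cinf_on_has_deriv[OF Cinf_on_deriv[OF assms]]
    Cinf_on_has_deriv[OF Cinf_on_deriv[OF Cinf_on_deriv[OF assms]]] by simp_all

lemma has_d_r:
  "Cinf_on U g \<Longrightarrow> (r, z, t) \<in> U \<Longrightarrow>
    ((\<lambda>s. g (s, z, t)) has_real_derivative d_r g (r, z, t)) (at r)"
  using Cinf_on_has_pdir[of U g "(1, 0, 0)" "(r, z, t)" r] by (simp add: d_r_eq_pdir Basis_real3)

lemma has_d_z:
  "Cinf_on U g \<Longrightarrow> (r, z, t) \<in> U \<Longrightarrow>
    ((\<lambda>s. g (r, s, t)) has_real_derivative d_z g (r, z, t)) (at z)"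
  using Cinf_on_has_pdir[of U g "(0, 1, 0)" "(r, z, t)" z] by (simp add: d_z_eq_pdir Basis_real3)

lemma has_d_t:
  "Cinf_on U g \<Longrightarrow> (r, z, t) \<in> U \<Longrightarrow>
    ((\<lambda>s. g (r, z, s)) has_real_derivative d_t g (r, z, t)) (at t)"
  using Cinf_on_has_pdir[of U g "(0, 0, 1)" "(r, z, t)" t] by (simp add: d_t_eq_pdir Basis_real3)

lemma has_d2_r:
  "Cinf_on U f \<Longrightarrow> (r, z) \<in> U \<Longrightarrow>
    ((\<lambda>s. f (s, z)) has_real_derivative d2_r f (r, z)) (at r)"
  using Cinf_on_has_pdir[of U f "(1, 0)" "(r, z)" r] by (simp add: d2_r_eq_pdir Basis_real2)

lemma has_d2_z:
  "Cinf_on U f \<Longrightarrow> (r, z) \<in> U \<Longrightarrow>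
    ((\<lambda>s. f (r, s)) has_real_derivative d2_z f (r, z)) (at z)"
  using Cinf_on_has_pdir[of U f "(0, 1)" "(r, z)" z] by (simp add: d2_z_eq_pdir Basis_real2)

definition kzk :: "real \<Rightarrow> real \<Rightarrow> real \<Rightarrow> real \<Rightarrow> (real \<Rightarrow> real) \<Rightarrow> dfun" where
  "kzk c0 dl bt m F x u = c0 ^ 4 * (u (2, 0, 0) + 2 * m / fst x * u (1, 0, 0)) + dl * u (0, 0, 3)
     + bt * (deriv (deriv F) (u (0, 0, 0)) * (u (0, 0, 1))\<^sup>2 + deriv F (u (0, 0, 0)) * u (0, 0, 2))
     - 2 * c0 ^ 3 * u (0, 1, 1)"

definition lagrangian_jets :: "(nat \<times> nat \<times> nat) set" where
  "lagrangian_jets = {(0,0,0), (1,0,0), (0,1,0), (0,0,1), (2,0,0), (0,0,2), (0,0,3), (0,1,1)}"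

lemma finite_lagrangian_jets [simp]: "finite lagrangian_jets"
  by (simp add: lagrangian_jets_def)

lemma depends_on_kzk: "depends_on lagrangian_jets (kzk c0 dl bt m F)"
  by (simp add: depends_on_def lagrangian_jets_def kzk_def)

lemma kzkE_eq_kzk:
  assumes "Cinf_on UNIV F"
  shows "kzkE c0 dl bt m F = kzk c0 dl bt m F"
proof -
  note F = Cinf_on_derivs[OF assms]
  let ?G0 = "\<lambda>(y::pt) (v::jet). F (v (0, 0, 0))"
  let ?G1 = "\<lambda>(y::pt) (v::jet). v (0, 0, 1) * deriv F (v (0, 0, 0))"
  have dep: "depends_on {(0, 0, 0)} ?G0" "depends_on {(0, 0, 0), (0, 0, 1)} ?G1"
    by (simp_all add: depends_on_def)
  have pu: "pu (0, 0, 0) ?G0 x u = deriv F (u (0, 0, 0))"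
    "pu (0, 0, 0) ?G1 x u = u (0, 0, 1) * deriv (deriv F) (u (0, 0, 0))"
    "pu (0, 0, 1) ?G1 x u = deriv F (u (0, 0, 0))" for x u
    by (rule pu_eqI, auto intro!: derivative_eq_intros F)+
  have "Dtot 2 ?G0 = ?G1"
    unfolding Dtot_eq_sum[OF _ dep(1), simplified]
    by (intro ext) (simp add: pu px_def shift_def split: prod.splits)
  moreover have "Dtot 2 ?G1 x u = deriv (deriv F) (u (0, 0, 0)) * (u (0, 0, 1))\<^sup>2
      + deriv F (u (0, 0, 0)) * u (0, 0, 2)" for x u
    using Dtot_eq_sum[OF _ dep(2), of 2 x u]
    by (simp add: pu[simplified] px_def shift_def power2_eq_square numeral_2_eq_2 split: prod.splits)
  ultimately show ?thesis
    by (intro ext) (simp add: kzkE_def kzk_def)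
qed

lemma kzk_jet_differentiable:
  assumes "Cinf_on UNIV F"
  shows "(\<lambda>s. kzk c0 dl bt m F x (u(J := s))) differentiable (at a)"
proof -
  have upd: "(\<lambda>s. (u(J := s)) K) differentiable (at a)" for K
    by (cases "K = J") auto
  have "deriv F differentiable (at y)" "deriv (deriv F) differentiable (at y)" for y
    using Cinf_on_derivs[OF assms] real_differentiable_def by blast+
  from this[THEN differentiable_compose, OF upd]
  show ?thesis
    unfolding kzk_def by (intro derivative_intros upd)
qed

lemma pu_kzk:
  assumes "Cinf_on UNIV F"
  shows "pu (0,0,0) (kzk c0 dl bt m F) x u
      = bt * (deriv (deriv (deriv F)) (u (0,0,0)) * (u (0,0,1))\<^sup>2 + deriv (deriv F) (u (0,0,0)) * u (0,0,2))"
    "pu (1,0,0) (kzk c0 dl bt m F) x u = c0 ^ 4 * (2 * m / fst x)"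
    "pu (0,0,1) (kzk c0 dl bt m F) x u = bt * deriv (deriv F) (u (0,0,0)) * (2 * u (0,0,1))"
    "pu (2,0,0) (kzk c0 dl bt m F) x u = c0 ^ 4"
    "pu (0,0,2) (kzk c0 dl bt m F) x u = bt * deriv F (u (0,0,0))"
    "pu (0,0,3) (kzk c0 dl bt m F) x u = dl"
    "pu (0,1,1) (kzk c0 dl bt m F) x u = - 2 * c0 ^ 3"
  using Cinf_on_derivs[OF assms]
  by (rule_tac pu_eqI; cases "fst x = 0"; auto simp: kzk_def intro!: derivative_eq_intros)+

lemma pu_kzk_010: "pu (0,1,0) (kzk c0 dl bt m F) = (\<lambda>x u. 0)"
  by (rule pu_eq_0_if_not_depends[of "lagrangian_jets - {(0,1,0)}"])
    (auto simp: depends_on_def lagrangian_jets_def kzk_def)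

lemma kzk_upd_003:
    "kzk c0 dl bt m F x (u((0,0,3) := s)) = kzk c0 dl bt m F x u + (s - u (0,0,3)) * dl"
  and kzk_upd_200:
    "kzk c0 dl bt m F x (u((2,0,0) := s)) = kzk c0 dl bt m F x u + (s - u (2,0,0)) * c0 ^ 4"
  by (simp_all add: kzk_def algebra_simps)

lemma depends_on_pu_kzk_first_order:
  assumes "Cinf_on UNIV F" "i < 3"
  shows "depends_on {(0,0,0), (0,0,1)} (pu (shift i (0,0,0)) (kzk c0 dl bt m F))"
proof -
  have "i = 0 \<or> i = 1 \<or> i = 2"
    using assms(2) by auto
  then show ?thesis
    unfolding depends_on_def using pu_kzk[OF assms(1)] pu_kzk_010
    by (auto simp: shift_def)
qed

lemma euler_lagrangian_jets:
  assumes "depends_on lagrangian_jets L"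
  shows "euler L x u = pu (0,0,0) L x u - (\<Sum>i<3. Dtot i (pu (shift i (0,0,0)) L) x u)
     + Dtot 0 (Dtot 0 (pu (2,0,0) L)) x u + Dtot 2 (Dtot 2 (pu (0,0,2) L)) x u
     - Dtot 2 (Dtot 2 (Dtot 2 (pu (0,0,3) L))) x u + Dtot 1 (Dtot 2 (pu (0,1,1) L)) x u"
  by (simp add: euler_eq_sum[OF _ assms] lagrangian_jets_def jord_def Dmulti_def shift_def
      numeral_3_eq_3 numeral_2_eq_2 lessThan_Suc)

abbreviation right_half :: "(real \<times> 'a) set" where
  "right_half \<equiv> {x. fst x > 0}"

lemma Dtot_point_fun:
  "Dtot 0 (\<lambda>x u. g x) = (\<lambda>x u. d_r g x)"
  "Dtot 1 (\<lambda>x u. g x) = (\<lambda>x u. d_z g x)"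
  "Dtot 2 (\<lambda>x u. g x) = (\<lambda>x u. d_t g x)"
proof -
  have "depends_on {} (\<lambda>x u. g x)"
    by (simp add: depends_on_def)
  note Dtot = Dtot_eq_sum[OF _ this, simplified]
  show "Dtot 0 (\<lambda>x u. g x) = (\<lambda>x u. d_r g x)" "Dtot 1 (\<lambda>x u. g x) = (\<lambda>x u. d_z g x)"
    "Dtot 2 (\<lambda>x u. g x) = (\<lambda>x u. d_t g x)"
    by (intro ext; simp add: Dtot px_def d_r_def d_z_def d_t_def split: prod.splits)+
qed

lemma d_r_scaled:
  assumes g: "Cinf_on right_half g" and f: "\<forall>y\<in>right_half. f y = g y * c"
  shows "\<forall>y\<in>right_half. d_r f y = d_r g y * c"
proof
  fix y :: pt
  assume "y \<in> right_half"
  then obtain r z t where y: "y = (r, z, t)" and r: "r > 0"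
    by (cases y) auto
  have "d_r f y = deriv (\<lambda>s. g (s, z, t) * c) r"
    unfolding d_r_def y using eventually_pos_nhds[OF r] f
    by (auto intro!: deriv_cong_ev elim!: eventually_mono)
  also have "\<dots> = d_r g y * c"
    using r by (auto simp: y intro!: DERIV_imp_deriv derivative_eq_intros has_d_r[OF g])
  finally show "d_r f y = d_r g y * c" .
qed

lemma d_z_scaled:
  assumes g: "Cinf_on right_half g" and f: "\<forall>y\<in>right_half. f y = g y * c"
  shows "\<forall>y\<in>right_half. d_z f y = d_z g y * c"
proof
  fix y :: pt
  assume "y \<in> right_half"
  then obtain r z t where y: "y = (r, z, t)" and r: "r > 0"
    by (cases y) auto
  have "d_z f y = deriv (\<lambda>s. g (r, s, t) * c) z"
    using f r by (simp add: d_z_def y)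
  also have "\<dots> = d_z g y * c"
    using r by (auto simp: y intro!: DERIV_imp_deriv derivative_eq_intros has_d_z[OF g])
  finally show "d_z f y = d_z g y * c" .
qed

lemma d_t_scaled:
  assumes g: "Cinf_on right_half g" and f: "\<forall>y\<in>right_half. f y = g y * c"
  shows "\<forall>y\<in>right_half. d_t f y = d_t g y * c"
proof
  fix y :: pt
  assume "y \<in> right_half"
  then obtain r z t where y: "y = (r, z, t)" and r: "r > 0"
    by (cases y) auto
  have "d_t f y = deriv (\<lambda>s. g (r, z, s) * c) t"
    using f r by (simp add: d_t_def y)
  also have "\<dots> = d_t g y * c"
    using r by (auto simp: y intro!: DERIV_imp_deriv derivative_eq_intros has_d_t[OF g])
  finally show "d_t f y = d_t g y * c" .
qed

text \<open>The formal adjoint of the linearised KZK operator, with \<open>q\<close> standing for \<open>F'(p)\<close>.\<close>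

definition kzk_adjoint :: "real \<Rightarrow> real \<Rightarrow> real \<Rightarrow> real \<Rightarrow> (pt \<Rightarrow> real) \<Rightarrow> real \<Rightarrow> pt \<Rightarrow> real" where
  "kzk_adjoint c0 dl bt m lam q x =
     c0 ^ 4 * (d_r (d_r lam) x - 2 * m * d_r lam x / fst x + 2 * m * lam x / (fst x)\<^sup>2)
     - dl * d_t (d_t (d_t lam)) x + bt * q * d_t (d_t lam) x - 2 * c0 ^ 3 * d_z (d_t lam) x"

lemma Dtot_point_fun_scaled:
  assumes g: "Cinf_on right_half g" and x: "fst x > 0"
  shows "Dtot 0 (Dtot 0 (\<lambda>y v. g y * c)) x u = d_r (d_r g) x * c"
    and "Dtot 2 (Dtot 2 (Dtot 2 (\<lambda>y v. g y * c))) x u = d_t (d_t (d_t g)) x * c"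
    and "Dtot 1 (Dtot 2 (\<lambda>y v. g y * c)) x u = d_z (d_t g) x * c"
proof -
  have r: "\<forall>y\<in>right_half. d_r (\<lambda>y. g y * c) y = d_r g y * c"
    and t: "\<forall>y\<in>right_half. d_t (\<lambda>y. g y * c) y = d_t g y * c"
    by (rule d_r_scaled[OF g] d_t_scaled[OF g], simp)+
  have "d_r (d_r (\<lambda>y. g y * c)) x = d_r (d_r g) x * c"
    using d_r_scaled[OF Cinf_on_d_r[OF g] r] x by blast
  moreover have "d_t (d_t (d_t (\<lambda>y. g y * c))) x = d_t (d_t (d_t g)) x * c"
    using d_t_scaled[OF Cinf_on_d_t[OF Cinf_on_d_t[OF g]] d_t_scaled[OF Cinf_on_d_t[OF g] t]] x by blast
  moreover have "d_z (d_t (\<lambda>y. g y * c)) x = d_z (d_t g) x * c"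
    using d_z_scaled[OF Cinf_on_d_t[OF g] t] x by blast
  ultimately show "Dtot 0 (Dtot 0 (\<lambda>y v. g y * c)) x u = d_r (d_r g) x * c"
    and "Dtot 2 (Dtot 2 (Dtot 2 (\<lambda>y v. g y * c))) x u = d_t (d_t (d_t g)) x * c"
    and "Dtot 1 (Dtot 2 (\<lambda>y v. g y * c)) x u = d_z (d_t g) x * c"
    by (simp_all add: Dtot_point_fun[simplified])
qed

lemma Dtot_r_point_over_r:
  assumes g: "Cinf_on right_half g" and x: "fst x > 0"
  shows "Dtot 0 (\<lambda>y v. g y * (c / fst y)) x u = c * (d_r g x / fst x - g x / (fst x)\<^sup>2)"
proof -
  obtain r z t where x_eq: "x = (r, z, t)" and r: "r > 0"
    using x by (cases x) auto
  have "((\<lambda>s. c / s) has_real_derivative - c / r\<^sup>2) (at r)"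
    using r by (auto intro!: derivative_eq_intros simp: power2_eq_square)
  from DERIV_mult[OF has_d_r[OF g] this] r
  have "((\<lambda>s. g (s, z, t) * (c / s)) has_real_derivative c * (d_r g x / r - g x / r\<^sup>2)) (at r)"
    by (simp add: x_eq algebra_simps)
  then show ?thesis
    by (simp add: Dtot_point_fun d_r_def x_eq DERIV_imp_deriv)
qed

lemma pu_point_multiplier:
  assumes F: "Cinf_on UNIV F"
  shows "pu (0,0,0) (\<lambda>y v. g y * kzk c0 dl bt m F y v) = (\<lambda>y v. g y * (bt *
      (deriv (deriv (deriv F)) (v (0,0,0)) * (v (0,0,1))\<^sup>2 + deriv (deriv F) (v (0,0,0)) * v (0,0,2))))"
    and "pu (1,0,0) (\<lambda>y v. g y * kzk c0 dl bt m F y v) = (\<lambda>y v. g y * (c0 ^ 4 * (2 * m) / fst y))"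
    and "pu (0,1,0) (\<lambda>y v. g y * kzk c0 dl bt m F y v) = (\<lambda>y v. 0)"
    and "pu (0,0,1) (\<lambda>y v. g y * kzk c0 dl bt m F y v)
      = (\<lambda>y v. g y * (bt * deriv (deriv F) (v (0,0,0)) * (2 * v (0,0,1))))"
    and "pu (2,0,0) (\<lambda>y v. g y * kzk c0 dl bt m F y v) = (\<lambda>y v. g y * c0 ^ 4)"
    and "pu (0,0,2) (\<lambda>y v. g y * kzk c0 dl bt m F y v) = (\<lambda>y v. g y * (bt * deriv F (v (0,0,0))))"
    and "pu (0,0,3) (\<lambda>y v. g y * kzk c0 dl bt m F y v) = (\<lambda>y v. g y * dl)"
    and "pu (0,1,1) (\<lambda>y v. g y * kzk c0 dl bt m F y v) = (\<lambda>y v. g y * (- 2 * c0 ^ 3))"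
proof -
  have "pu J (\<lambda>y v. g y * kzk c0 dl bt m F y v) y v = g y * pu J (kzk c0 dl bt m F) y v" for J y v
    by (rule pu_mult_indep[of "{}"]) (simp_all add: depends_on_def kzk_jet_differentiable[OF F])
  then show "pu (0,0,0) (\<lambda>y v. g y * kzk c0 dl bt m F y v) = (\<lambda>y v. g y * (bt *
      (deriv (deriv (deriv F)) (v (0,0,0)) * (v (0,0,1))\<^sup>2 + deriv (deriv F) (v (0,0,0)) * v (0,0,2))))"
    and "pu (1,0,0) (\<lambda>y v. g y * kzk c0 dl bt m F y v) = (\<lambda>y v. g y * (c0 ^ 4 * (2 * m) / fst y))"
    and "pu (0,1,0) (\<lambda>y v. g y * kzk c0 dl bt m F y v) = (\<lambda>y v. 0)"
    and "pu (0,0,1) (\<lambda>y v. g y * kzk c0 dl bt m F y v)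
      = (\<lambda>y v. g y * (bt * deriv (deriv F) (v (0,0,0)) * (2 * v (0,0,1))))"
    and "pu (2,0,0) (\<lambda>y v. g y * kzk c0 dl bt m F y v) = (\<lambda>y v. g y * c0 ^ 4)"
    and "pu (0,0,2) (\<lambda>y v. g y * kzk c0 dl bt m F y v) = (\<lambda>y v. g y * (bt * deriv F (v (0,0,0))))"
    and "pu (0,0,3) (\<lambda>y v. g y * kzk c0 dl bt m F y v) = (\<lambda>y v. g y * dl)"
    and "pu (0,1,1) (\<lambda>y v. g y * kzk c0 dl bt m F y v) = (\<lambda>y v. g y * (- 2 * c0 ^ 3))"
    by (simp_all add: fun_eq_iff pu_kzk[OF F, simplified] pu_kzk_010[simplified])
qed

lemma Dtot_t_pu_p_t:
  assumes F: "Cinf_on UNIV F" and g: "Cinf_on right_half g" and x: "fst x > 0"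
  shows "Dtot 2 (pu (0,0,1) (\<lambda>y v. g y * kzk c0 dl bt m F y v)) x u
    = d_t g x * (bt * deriv (deriv F) (u (0,0,0)) * (2 * u (0,0,1)))
      + u (0,0,1) * (g x * (bt * deriv (deriv (deriv F)) (u (0,0,0)) * (2 * u (0,0,1))))
      + u (0,0,2) * (g x * (bt * deriv (deriv F) (u (0,0,0)) * 2))"
proof -
  let ?M = "\<lambda>y v. g y * (bt * deriv (deriv F) (v (0,0,0)) * (2 * v (0,0,1)))"
  obtain r z t where x_eq: "x = (r, z, t)" and r: "r > 0"
    using x by (cases x) auto
  have in_half: "(r, z, s) \<in> right_half" for s
    using r by simp
  have dep: "depends_on {(0,0,0), (0,0,1)} ?M"
    by (simp add: depends_on_def)
  have "pu (0,0,0) ?M x u = g x * (bt * deriv (deriv (deriv F)) (u (0,0,0)) * (2 * u (0,0,1)))"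
    "pu (0,0,1) ?M x u = g x * (bt * deriv (deriv F) (u (0,0,0)) * 2)"
    using Cinf_on_derivs[OF F] by (rule_tac pu_eqI; auto intro!: derivative_eq_intros)+
  moreover have "px 2 ?M x u = d_t g x * (bt * deriv (deriv F) (u (0,0,0)) * (2 * u (0,0,1)))"
    by (auto simp: px_def x_eq intro!: DERIV_imp_deriv derivative_eq_intros has_d_t[OF g in_half])
  ultimately show ?thesis
    unfolding pu_point_multiplier[OF F]
    using Dtot_eq_sum[OF _ dep, of 2 x u] by (simp add: shift_def numeral_2_eq_2)
qed

lemma Dtot_tt_pu_p_tt:
  assumes F: "Cinf_on UNIV F" and g: "Cinf_on right_half g" and x: "fst x > 0"
  shows "Dtot 2 (Dtot 2 (pu (0,0,2) (\<lambda>y v. g y * kzk c0 dl bt m F y v))) x u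
    = d_t (d_t g) x * (bt * deriv F (u (0,0,0))) + 2 * u (0,0,1) * (d_t g x * (bt * deriv (deriv F) (u (0,0,0))))
      + (u (0,0,1))\<^sup>2 * (g x * (bt * deriv (deriv (deriv F)) (u (0,0,0))))
      + u (0,0,2) * (g x * (bt * deriv (deriv F) (u (0,0,0))))"
proof -
  define F1 where "F1 = deriv F"
  define F2 where "F2 = deriv F1"
  define F3 where "F3 = deriv F2"
  have DF: "(F1 has_real_derivative F2 q) (at q)" "(F2 has_real_derivative F3 q) (at q)" for q
    using Cinf_on_derivs[OF F] by (simp_all add: F1_def F2_def F3_def)
  let ?M = "\<lambda>y v. g y * (bt * F1 (v (0,0,0)))"
  let ?Q = "\<lambda>y v. d_t g y * (bt * F1 (v (0,0,0))) + v (0,0,1) * (g y * (bt * F2 (v (0,0,0))))"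
  have dep: "depends_on {(0,0,0), (0,0,1)} ?M" "depends_on {(0,0,0), (0,0,1)} ?Q"
    by (simp_all add: depends_on_def)
  have "agree_pos (Dtot 2 ?M) ?Q"
    unfolding agree_pos_def
  proof (intro allI impI)
    fix y :: pt and v :: jet
    assume "fst y > 0"
    then obtain r z t where y: "y = (r, z, t)" and r: "r > 0"
      by (cases y) auto
    have in_half: "(r, z, s) \<in> right_half" for s
      using r by simp
    have "pu (0,0,0) ?M y v = g y * (bt * F2 (v (0,0,0)))" "pu (0,0,1) ?M y v = 0"
      by (rule pu_eqI, auto intro!: derivative_eq_intros DF)+
    moreover have "px 2 ?M y v = d_t g y * (bt * F1 (v (0,0,0)))"
      by (auto simp: px_def y intro!: DERIV_imp_deriv derivative_eq_intros has_d_t[OF g in_half])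
    ultimately show "Dtot 2 ?M y v = ?Q y v"
      using Dtot_eq_sum[OF _ dep(1), of 2 y v] by (simp add: shift_def)
  qed
  then have agree: "agree_pos (Dtot 2 (Dtot 2 ?M)) (Dtot 2 ?Q)"
    using depends_on_Dtot[OF _ dep(1), of 2] dep(2)
    by (intro agree_pos_Dtot[of "shift_set 2 {(0,0,0), (0,0,1)}"])
      (auto simp: shift_set_def intro: depends_on_mono)
  obtain r z t where x_eq: "x = (r, z, t)" and r: "r > 0"
    using x by (cases x) auto
  have in_half: "(r, z, s) \<in> right_half" for s
    using r by simp
  have "pu (0,0,0) ?Q x u = d_t g x * (bt * F2 (u (0,0,0))) + u (0,0,1) * (g x * (bt * F3 (u (0,0,0))))"
    "pu (0,0,1) ?Q x u = g x * (bt * F2 (u (0,0,0)))"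
    by (rule pu_eqI, auto intro!: derivative_eq_intros DF)+
  moreover have "px 2 ?Q x u = d_t (d_t g) x * (bt * F1 (u (0,0,0))) + u (0,0,1) * (d_t g x * (bt * F2 (u (0,0,0))))"
    by (auto simp: px_def x_eq intro!: DERIV_imp_deriv derivative_eq_intros has_d_t[OF g in_half]
        has_d_t[OF Cinf_on_d_t[OF g] in_half])
  ultimately show ?thesis
    unfolding pu_point_multiplier[OF F]
    using Dtot_eq_sum[OF _ dep(2), of 2 x u] agree_posD[OF agree r, of z t u]
    by (simp add: F1_def F2_def F3_def shift_def numeral_2_eq_2 x_eq power2_eq_square algebra_simps)
qed

lemma euler_point_multiplier:
  assumes F: "Cinf_on UNIV F" and lam: "Cinf_on right_half lam" and x: "fst x > 0"
  shows "euler (\<lambda>y v. lam y * kzk c0 dl bt m F y v) x u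
    = kzk_adjoint c0 dl bt m lam (deriv F (u (0,0,0))) x"
proof -
  have dep: "depends_on lagrangian_jets (\<lambda>y v. lam y * kzk c0 dl bt m F y v)"
    using depends_on_kzk unfolding depends_on_def by metis
  have first_order: "(\<Sum>i<3. Dtot i (pu (shift i (0,0,0)) (\<lambda>y v. lam y * kzk c0 dl bt m F y v)) x u)
      = Dtot 0 (pu (1,0,0) (\<lambda>y v. lam y * kzk c0 dl bt m F y v)) x u
        + Dtot 1 (pu (0,1,0) (\<lambda>y v. lam y * kzk c0 dl bt m F y v)) x u
        + Dtot 2 (pu (0,0,1) (\<lambda>y v. lam y * kzk c0 dl bt m F y v)) x u"
    by (simp add: lessThan_Suc numeral_3_eq_3 numeral_2_eq_2 shift_def)
  show ?thesis
    unfolding euler_lagrangian_jets[OF dep] first_order Dtot_t_pu_p_t[OF F lam x] Dtot_tt_pu_p_tt[OF F lam x]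
    unfolding pu_point_multiplier[OF F]
    unfolding Dtot_zero Dtot_r_point_over_r[OF lam x] Dtot_point_fun_scaled[OF lam x]
    by (simp add: kzk_adjoint_def algebra_simps power2_eq_square)
qed

section \<open>Multipliers do not depend on the jet\<close>

definition first_jets :: "(nat \<times> nat \<times> nat) set" where
  "first_jets = {(0,0,0), (1,0,0), (0,1,0), (0,0,1)}"

lemma first_jets_subset: "first_jets \<subseteq> lagrangian_jets"
  by (auto simp: first_jets_def lagrangian_jets_def)

lemma Dtot_pu_first_order_upd:
  fixes Lam :: dfun
  assumes F: "Cinf_on UNIV F" and i: "i < 3" and j: "j < 3"
    and dep: "depends_on first_jets Lam"
    and diff: "\<And>J v. (\<lambda>s. Lam x (v(J := s))) differentiable (at (v J))"
  shows "Dtot j (pu (shift j (0,0,0)) (\<lambda>y v. Lam y v * kzk c0 dl bt m F y v)) x (u(shift i (0,0,3) := s))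
    = Dtot j (pu (shift j (0,0,0)) (\<lambda>y v. Lam y v * kzk c0 dl bt m F y v)) x u
      + (if j = i then (s - u (shift i (0,0,3))) * (pu (shift i (0,0,0)) Lam x u * dl) else 0)"
proof -
  let ?E = "kzk c0 dl bt m F"
  let ?L = "\<lambda>y v. Lam y v * ?E y v"
  let ?e = "shift i (0,0,0)"
  have dep_L: "depends_on lagrangian_jets ?L"
    using depends_on_mult[OF depends_on_mono[OF dep first_jets_subset] depends_on_kzk] .
  show ?thesis
  proof (cases "j = i")
    case True
    have "pu (0,0,3) (pu ?e ?L) x u = pu ?e Lam x u * dl"
    proof (rule pu_affine)
      fix s'
      let ?w = "u((0,0,3) := s')"
      have "(0,0,3) \<notin> first_jets"
        by (simp add: first_jets_def)
      then have "pu ?e Lam x ?w = pu ?e Lam x u" "Lam x ?w = Lam x u"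
        using depends_on_upd[OF depends_on_pu[OF dep]] depends_on_upd[OF dep] by auto
      moreover have "pu ?e ?E x ?w = pu ?e ?E x u"
        by (rule depends_on_upd[OF depends_on_pu_kzk_first_order[OF F i]]) simp
      ultimately show "pu ?e ?L x ?w = pu ?e ?L x u + (s' - u (0,0,3)) * (pu ?e Lam x u * dl)"
        using pu_mult[of Lam x ?w ?e ?E, OF diff kzk_jet_differentiable[OF F]]
          pu_mult[of Lam x u ?e ?E, OF diff kzk_jet_differentiable[OF F]]
        by (simp add: kzk_upd_003 algebra_simps)
    qed
    moreover have "shift i (0,0,3) \<notin> lagrangian_jets"
      using i by (auto simp: lagrangian_jets_def shift_def)
    ultimately show ?thesis
      using True Dtot_upd_shift[OF _ depends_on_pu[OF dep_L], of i "(0,0,3)"] by simp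
  next
    case False
    then have "shift i (0,0,3) \<notin> shift_set j lagrangian_jets"
      using i j by (auto simp: shift_set_def lagrangian_jets_def shift_def)
    with False show ?thesis
      using depends_on_upd[OF depends_on_Dtot[OF _ depends_on_pu[OF dep_L]]] by simp
  qed
qed

lemma Dtot_ttt_upd:
  fixes Lam :: dfun
  assumes i: "i < 3" and dep: "depends_on first_jets Lam"
    and diff: "\<And>J v. (\<lambda>s. Lam x (v(J := s))) differentiable (at (v J))"
  shows "Dtot 2 (Dtot 2 (Dtot 2 (\<lambda>y v. Lam y v * c))) x (u(shift i (0,0,3) := s))
    = Dtot 2 (Dtot 2 (Dtot 2 (\<lambda>y v. Lam y v * c))) x u
      + (s - u (shift i (0,0,3))) * (pu (shift i (0,0,0)) Lam x u * c)"
proof -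
  let ?N = "\<lambda>y v. Lam y v * c"
  let ?e = "shift i (0,0,0)"
  let ?S1 = "shift_set 2 first_jets"
  have K_eq: "shift i (0,0,3) = shift 2 (shift 2 (shift 2 ?e))"
    by (auto simp: shift_def)
  have notin: "shift 2 (shift 2 (shift 2 ?e)) \<notin> shift_set 2 ?S1"
    "shift 2 (shift 2 ?e) \<notin> ?S1" "shift 2 ?e \<notin> first_jets"
    using i by (auto simp: shift_set_def first_jets_def shift_def)
  have dep_N: "depends_on first_jets ?N"
    by (rule depends_on_mult[OF dep]) (simp add: depends_on_def)
  have dep1: "depends_on ?S1 (Dtot 2 ?N)"
    by (rule depends_on_Dtot[OF _ dep_N]) (simp add: first_jets_def)
  have dep2: "depends_on (shift_set 2 ?S1) (Dtot 2 (Dtot 2 ?N))"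
    by (rule depends_on_Dtot[OF _ dep1]) (simp add: first_jets_def)
  have "pu (shift 2 (shift 2 ?e)) (Dtot 2 (Dtot 2 ?N)) x u = pu (shift 2 ?e) (Dtot 2 ?N) x u"
    by (rule pu_Dtot_shift[OF _ dep1 notin(2)]) (simp add: first_jets_def)
  also have "\<dots> = pu ?e ?N x u"
    by (rule pu_Dtot_shift[OF _ dep_N notin(3)]) (simp add: first_jets_def)
  also have "\<dots> = pu ?e Lam x u * c"
    by (rule pu_mult_const[of Lam, OF diff])
  finally show ?thesis
    using Dtot_upd_shift[OF _ dep2 notin(1), of x u s] K_eq by (simp add: first_jets_def)
qed

lemma Dtot_rr_upd:
  fixes Lam :: dfun
  assumes dep: "depends_on {(0,0,0)} Lam"
    and diff: "\<And>J v. (\<lambda>s. Lam x (v(J := s))) differentiable (at (v J))"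
  shows "Dtot 0 (Dtot 0 (\<lambda>y v. Lam y v * c)) x (u((2,0,0) := s))
    = Dtot 0 (Dtot 0 (\<lambda>y v. Lam y v * c)) x u + (s - u (2,0,0)) * (pu (0,0,0) Lam x u * c)"
proof -
  let ?N = "\<lambda>y v. Lam y v * c"
  have dep_N: "depends_on {(0,0,0)} ?N"
    by (rule depends_on_mult[OF dep]) (simp add: depends_on_def)
  have notin: "shift 0 (1,0,0) \<notin> shift_set 0 {(0,0,0)}" "shift 0 (0,0,0) \<notin> {(0,0,0)}"
    by (auto simp: shift_set_def shift_def)
  have "pu (shift 0 (0,0,0)) (Dtot 0 ?N) x u = pu (0,0,0) ?N x u"
    by (rule pu_Dtot_shift[OF _ dep_N notin(2)]) simp
  also have "\<dots> = pu (0,0,0) Lam x u * c"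
    by (rule pu_mult_const[of Lam, OF diff])
  finally show ?thesis
    using Dtot_upd_shift[OF _ depends_on_Dtot[OF _ dep_N] notin(1), of x u s]
    by (simp add: shift_def numeral_2_eq_2)
qed

text \<open>The slope of \<open>\<E>\<^sub>p[\<Lambda> E]\<close> in the jet \<open>shift i (0,0,3)\<close> is \<open>-2\<delta> \<partial>\<Lambda>/\<partial>p\<^sub>i\<close>:
  one half comes from \<open>-D\<^sub>i(\<partial>(\<Lambda>E)/\<partial>p\<^sub>i)\<close>, the other from \<open>-D\<^sub>t\<^sup>3(\<delta>\<Lambda>)\<close>.\<close>

lemma multiplier_first_order_derivs_vanish:
  fixes Lam :: dfun
  assumes F: "Cinf_on UNIV F" and dl_nz: "dl \<noteq> 0" and i: "i < 3"
    and dep: "depends_on first_jets Lam"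
    and diff: "\<And>J v. (\<lambda>s. Lam x (v(J := s))) differentiable (at (v J))"
    and euler0: "\<And>v. euler (\<lambda>y v. Lam y v * kzk c0 dl bt m F y v) x v = 0"
  shows "pu (shift i (0,0,0)) Lam x u = 0"
proof -
  let ?E = "kzk c0 dl bt m F"
  let ?L = "\<lambda>y v. Lam y v * ?E y v"
  let ?K = "shift i (0,0,3)"
  let ?slope = "pu (shift i (0,0,0)) Lam x u * dl"
  have dep_L: "depends_on lagrangian_jets ?L"
    using depends_on_mult[OF depends_on_mono[OF dep first_jets_subset] depends_on_kzk] .
  have pu_high: "pu J ?L = (\<lambda>y v. Lam y v * pu J ?E y v)" if "J \<notin> first_jets" for J
    using pu_mult_indep[OF dep that kzk_jet_differentiable[OF F]] by (intro ext)
  have dep_high: "depends_on first_jets (pu J ?L)" if "J \<in> {(2,0,0), (0,0,2), (0,1,1)}" for J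
  proof -
    have "depends_on first_jets (pu J ?E)"
      using that pu_kzk[OF F] by (auto simp: depends_on_def first_jets_def)
    with that show ?thesis
      using pu_high[of J] depends_on_mult[OF dep] by (auto simp: first_jets_def)
  qed
  have low_order: "Dtot a (Dtot b M) x (u(?K := s)) = Dtot a (Dtot b M) x u"
    if "depends_on first_jets M" "a < 3" "b < 3" for a b M s
  proof (rule depends_on_upd[OF depends_on_Dtot[OF _ depends_on_Dtot[OF _ that(1)]]])
    show "?K \<notin> shift_set a (shift_set b first_jets)"
      using i that(2,3) by (auto simp: shift_set_def first_jets_def shift_def)
  qed (simp_all add: first_jets_def)
  have "euler ?L x (u(?K := s)) = euler ?L x u + (s - u ?K) * (- ?slope - ?slope)" for s
  proof -
    have first_order: "(\<Sum>j<3. Dtot j (pu (shift j (0,0,0)) ?L) x (u(?K := s)))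
        = (\<Sum>j<3. Dtot j (pu (shift j (0,0,0)) ?L) x u) + (s - u ?K) * ?slope"
      using i by (simp add: Dtot_pu_first_order_upd[OF F i _ dep diff] sum.distrib)
    have zeroth_order: "pu (0,0,0) ?L x (u(?K := s)) = pu (0,0,0) ?L x u"
      using i by (intro depends_on_upd[OF depends_on_pu[OF dep_L]]) (auto simp: lagrangian_jets_def shift_def)
    have pu_003: "pu (0,0,3) ?L = (\<lambda>y v. Lam y v * dl)"
      using pu_high[of "(0,0,3)"] pu_kzk[OF F] by (simp add: first_jets_def)
    have second_order: "Dtot 0 (Dtot 0 (pu (2,0,0) ?L)) x (u(?K := s)) = Dtot 0 (Dtot 0 (pu (2,0,0) ?L)) x u"
      "Dtot 2 (Dtot 2 (pu (0,0,2) ?L)) x (u(?K := s)) = Dtot 2 (Dtot 2 (pu (0,0,2) ?L)) x u"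
      "Dtot 1 (Dtot 2 (pu (0,1,1) ?L)) x (u(?K := s)) = Dtot 1 (Dtot 2 (pu (0,1,1) ?L)) x u"
      using low_order[OF dep_high] by simp_all
    show ?thesis
      unfolding euler_lagrangian_jets[OF dep_L] first_order zeroth_order pu_003 second_order
        Dtot_ttt_upd[OF i dep diff]
      by (simp add: algebra_simps)
  qed
  from this[of "u ?K + 1"] show ?thesis
    using euler0 dl_nz by simp
qed

lemma multiplier_p_derivative_vanishes:
  fixes Lam :: dfun
  assumes F: "Cinf_on UNIV F" and c0_nz: "c0 \<noteq> 0"
    and dep: "depends_on {(0,0,0)} Lam"
    and diff: "\<And>J v. (\<lambda>s. Lam x (v(J := s))) differentiable (at (v J))"
    and euler0: "\<And>v. euler (\<lambda>y v. Lam y v * kzk c0 dl bt m F y v) x v = 0"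
  shows "pu (0,0,0) Lam x u = 0"
proof -
  let ?E = "kzk c0 dl bt m F"
  let ?L = "\<lambda>y v. Lam y v * ?E y v"
  let ?e = "\<lambda>j. shift j (0,0,0)"
  let ?K = "(2,0,0) :: nat \<times> nat \<times> nat"
  let ?S = "{(0,0,0), (0,0,1)} :: (nat \<times> nat \<times> nat) set"
  let ?slope = "pu (0,0,0) Lam x u * c0 ^ 4"
  have dep_L: "depends_on lagrangian_jets ?L"
    using depends_on_mult[OF depends_on_mono[OF dep] depends_on_kzk] by (simp add: lagrangian_jets_def)
  have dE: "(\<lambda>s. ?E y (v(J := s))) differentiable (at (v J))" for y v J
    by (rule kzk_jet_differentiable[OF F])
  have pu_high: "pu J ?L = (\<lambda>y v. Lam y v * pu J ?E y v)" if "J \<noteq> (0,0,0)" for J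
    using pu_mult_indep[OF dep _ dE] that by (intro ext) simp
  have dep_first: "depends_on ?S (pu (?e j) ?L)" if "j < 3" for j
    using pu_high[OF shift_neq] depends_on_mult[OF depends_on_mono[OF dep]
        depends_on_pu_kzk_first_order[OF F that]] by simp
  have dep_low: "depends_on ?S (pu J ?L)" if "J \<in> {(0,0,2), (0,0,3), (0,1,1)}" for J
  proof -
    have "depends_on ?S Lam"
      using depends_on_mono[OF dep] by simp
    moreover have "depends_on ?S (pu J ?E)"
      using that pu_kzk[OF F] by (auto simp: depends_on_def)
    ultimately have "depends_on ?S (\<lambda>y v. Lam y v * pu J ?E y v)"
      by (rule depends_on_mult)
    with that show ?thesis
      using pu_high[of J] by auto
  qed
  have pu_200: "pu (2,0,0) ?L = (\<lambda>y v. Lam y v * c0 ^ 4)"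
    using pu_high[of "(2,0,0)"] pu_kzk[OF F] by simp
  have first_order: "Dtot j (pu (?e j) ?L) x (u(?K := s)) = Dtot j (pu (?e j) ?L) x u"
    if "j < 3" for j s
  proof (rule depends_on_upd[OF depends_on_Dtot[OF _ dep_first[OF that]]])
    show "?K \<notin> shift_set j ?S"
      using that by (auto simp: shift_set_def shift_def)
  qed simp
  have t_derivs: "Dtot a (Dtot 2 M) x (u(?K := s)) = Dtot a (Dtot 2 M) x u"
    if "depends_on ?S M" "a \<in> {1, 2}" for a M s
    using depends_on_upd[OF depends_on_Dtot[OF _ depends_on_Dtot[OF _ that(1)], of 2 a]] that(2)
    by (auto simp: shift_set_def shift_def)
  have ttt_derivs: "Dtot 2 (Dtot 2 (Dtot 2 M)) x (u(?K := s)) = Dtot 2 (Dtot 2 (Dtot 2 M)) x u"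
    if "depends_on ?S M" for M s
    using depends_on_upd[OF depends_on_Dtot[OF _ depends_on_Dtot[OF _ depends_on_Dtot[OF _ that]]]]
    by (auto simp: shift_set_def shift_def)
  have zeroth: "pu (0,0,0) ?L x (u(?K := s)) = pu (0,0,0) ?L x u + (s - u ?K) * ?slope" for s
    using pu_mult[of Lam x "u(?K := s)" "(0,0,0)" ?E, OF diff dE] pu_mult[of Lam x u "(0,0,0)" ?E, OF diff dE]
      depends_on_upd[OF depends_on_pu[OF dep], of ?K] depends_on_upd[OF dep, of ?K] pu_kzk(1)[OF F]
    by (simp add: kzk_upd_200 algebra_simps)
  have sum_first_order: "(\<Sum>j<3. Dtot j (pu (?e j) ?L) x (u(?K := s))) = (\<Sum>j<3. Dtot j (pu (?e j) ?L) x u)"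
    for s by (rule sum.cong) (simp_all add: first_order)
  have low_order: "Dtot 2 (Dtot 2 (pu (0,0,2) ?L)) x (u(?K := s)) = Dtot 2 (Dtot 2 (pu (0,0,2) ?L)) x u"
    "Dtot 1 (Dtot 2 (pu (0,1,1) ?L)) x (u(?K := s)) = Dtot 1 (Dtot 2 (pu (0,1,1) ?L)) x u"
    "Dtot 2 (Dtot 2 (Dtot 2 (pu (0,0,3) ?L))) x (u(?K := s)) = Dtot 2 (Dtot 2 (Dtot 2 (pu (0,0,3) ?L))) x u"
    for s using t_derivs[OF dep_low] ttt_derivs[OF dep_low] by simp_all
  have "euler ?L x (u(?K := s)) = euler ?L x u + (s - u ?K) * (?slope + ?slope)" for s
    unfolding euler_lagrangian_jets[OF dep_L] pu_200 zeroth Dtot_rr_upd[OF dep diff] sum_first_order low_order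
    by (simp add: algebra_simps)
  from this[of "u ?K + 1"] show ?thesis
    using euler0 c0_nz by simp
qed

abbreviation jet1 :: "jet \<Rightarrow> real \<times> real \<times> real \<times> real" where
  "jet1 v \<equiv> (v (0,0,0), v (1,0,0), v (0,1,0), v (0,0,1))"

lemma euler_multiplier_eq_0:
  assumes "Cinf_on UNIV F" "is_multiplier c0 dl bt m F Lam" "fst x > 0"
  shows "euler (\<lambda>y v. Lam (y, jet1 v) * kzk c0 dl bt m F y v) x u = 0"
  using assms by (cases x) (simp add: is_multiplier_def kzkE_eq_kzk)

lemma Cinf_on_slot_derivatives:
  fixes Lam :: "pt \<times> (real \<times> real \<times> real \<times> real) \<Rightarrow> real"
  assumes Lam: "Cinf_on {y. fst (fst y) > 0} Lam" and x: "fst x > 0"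
  shows "(\<lambda>s. Lam (x, (s, b, c, d))) differentiable (at a)"
    "(\<lambda>s. Lam (x, (a, s, c, d))) differentiable (at b)"
    "(\<lambda>s. Lam (x, (a, b, s, d))) differentiable (at c)"
    "(\<lambda>s. Lam (x, (a, b, c, s))) differentiable (at d)"
proof -
  have "(0, (1, 0, 0, 0)) \<in> (Basis :: (pt \<times> (real \<times> real \<times> real \<times> real)) set)"
    "(0, (0, 1, 0, 0)) \<in> (Basis :: (pt \<times> (real \<times> real \<times> real \<times> real)) set)"
    "(0, (0, 0, 1, 0)) \<in> (Basis :: (pt \<times> (real \<times> real \<times> real \<times> real)) set)"
    "(0, (0, 0, 0, 1)) \<in> (Basis :: (pt \<times> (real \<times> real \<times> real \<times> real)) set)"
    by (auto simp: Basis_prod_def zero_prod_def)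
  note B = this
  have D: "((\<lambda>s. Lam ((x, (a, b, c, d)) + (s - t) *\<^sub>R e)) has_real_derivative
      pdir e Lam (x, (a, b, c, d))) (at t)" if "e \<in> Basis" for e t
    using Cinf_on_has_pdir[OF Lam that, of "(x, (a, b, c, d))" t] x by simp
  show "(\<lambda>s. Lam (x, (s, b, c, d))) differentiable (at a)"
    "(\<lambda>s. Lam (x, (a, s, c, d))) differentiable (at b)"
    "(\<lambda>s. Lam (x, (a, b, s, d))) differentiable (at c)"
    "(\<lambda>s. Lam (x, (a, b, c, s))) differentiable (at d)"
    using D[OF B(1), of a] D[OF B(2), of b] D[OF B(3), of c] D[OF B(4), of d]
    by (auto simp: real_differentiable_def)
qed

lemma multiplier_jet_differentiable:
  fixes Lam :: "pt \<times> (real \<times> real \<times> real \<times> real) \<Rightarrow> real"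
  assumes Lam: "Cinf_on {y. fst (fst y) > 0} Lam" and x: "fst x > 0"
  shows "(\<lambda>s. Lam (x, jet1 (v(J := s)))) differentiable (at (v J))"
proof -
  consider "J = (0,0,0)" | "J = (1,0,0)" | "J = (0,1,0)" | "J = (0,0,1)" | "J \<notin> first_jets"
    by (auto simp: first_jets_def)
  then show ?thesis
    using Cinf_on_slot_derivatives[OF Lam x] by cases (auto simp: first_jets_def)
qed

lemma multiplier_indep_first_derivs:
  fixes Lam :: "pt \<times> (real \<times> real \<times> real \<times> real) \<Rightarrow> real"
  assumes F: "Cinf_on UNIV F" and dl_nz: "dl \<noteq> 0"
    and Lam: "Cinf_on {y. fst (fst y) > 0} Lam" and mult: "is_multiplier c0 dl bt m F Lam"
    and x: "fst x > 0"
  shows "Lam (x, (a, b, c, d)) = Lam (x, (a, 0, 0, 0))"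
proof -
  let ?Lam = "\<lambda>y v. Lam (y, jet1 v)"
  have dep: "depends_on first_jets ?Lam"
    by (simp add: depends_on_def first_jets_def)
  have const: "Lam (x, jet1 (v(shift i (0,0,0) := s))) = Lam (x, jet1 (v(shift i (0,0,0) := 0)))"
    if "i < 3" for i v s
  proof -
    have "\<forall>s0. ((\<lambda>s. Lam (x, jet1 (v(shift i (0,0,0) := s)))) has_real_derivative 0) (at s0)"
      using has_real_derivative_pu[of ?Lam, OF multiplier_jet_differentiable[OF Lam x],
          of "v(shift i (0,0,0) := s0)" "shift i (0,0,0)" for s0]
        multiplier_first_order_derivs_vanish[OF F dl_nz that dep
          multiplier_jet_differentiable[OF Lam x] euler_multiplier_eq_0[OF F mult x]]
      by simp
    then show ?thesis
      by (rule DERIV_isconst_all)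
  qed
  let ?v = "\<lambda>J. if J = (0,0,0) then a else if J = (1,0,0) then b else if J = (0,1,0) then c else d"
  show ?thesis
    using const[of 2 ?v d] const[of 1 "?v((0,0,1) := 0)" c] const[of 0 "?v((0,0,1) := 0, (0,1,0) := 0)" b]
    by (simp add: shift_def numeral_2_eq_2)
qed

lemma multiplier_depends_only_on_point:
  fixes Lam :: "pt \<times> (real \<times> real \<times> real \<times> real) \<Rightarrow> real"
  assumes F: "Cinf_on UNIV F" and c0_nz: "c0 \<noteq> 0" and dl_nz: "dl \<noteq> 0"
    and Lam: "Cinf_on {y. fst (fst y) > 0} Lam" and mult: "is_multiplier c0 dl bt m F Lam"
    and x: "fst x > 0"
  shows "Lam (x, w) = Lam (x, 0)"
proof -
  note indep = multiplier_indep_first_derivs[OF F dl_nz Lam mult]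
  let ?E = "kzk c0 dl bt m F"
  let ?Lam = "\<lambda>y v. Lam (y, (v (0,0,0), 0, 0, 0))"
  have dep: "depends_on {(0,0,0)} ?Lam"
    by (simp add: depends_on_def)
  have agree: "agree_pos (\<lambda>y v. Lam (y, jet1 v) * ?E y v) (\<lambda>y v. ?Lam y v * ?E y v)"
    unfolding agree_pos_def
  proof (intro allI impI)
    fix y :: pt and v :: jet
    assume "fst y > 0"
    from indep[OF this, of "v (0,0,0)" "v (1,0,0)" "v (0,1,0)" "v (0,0,1)"]
    show "Lam (y, jet1 v) * ?E y v = ?Lam y v * ?E y v"
      by simp
  qed
  have "agree_pos (euler (\<lambda>y v. Lam (y, jet1 v) * ?E y v)) (euler (\<lambda>y v. ?Lam y v * ?E y v))"
    by (intro agree_pos_euler[OF finite_lagrangian_jets _ _ agree] depends_on_mult depends_on_kzk)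
      (auto simp: depends_on_def lagrangian_jets_def)
  from this[unfolded agree_pos_def, rule_format, OF x]
  have euler0: "euler (\<lambda>y v. ?Lam y v * ?E y v) x v = 0" for v
    using euler_multiplier_eq_0[OF F mult x] by simp
  have diff: "(\<lambda>s. ?Lam x (v(J := s))) differentiable (at (v J))" for v J
    using Cinf_on_slot_derivatives(1)[OF Lam x] by (cases "J = (0,0,0)") auto
  have "\<forall>s0. ((\<lambda>s. Lam (x, (s, 0, 0, 0))) has_real_derivative 0) (at s0)"
    using has_real_derivative_pu[of ?Lam, OF diff, of "\<lambda>_. s0" "(0,0,0)" for s0]
      multiplier_p_derivative_vanishes[OF F c0_nz dep diff euler0]
    by simp
  then have "Lam (x, (a, 0, 0, 0)) = Lam (x, (0, 0, 0, 0))" for a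
    by (rule DERIV_isconst_all)
  moreover obtain a b c d where "w = (a, b, c, d)"
    by (cases w)
  ultimately show ?thesis
    using indep[OF x, of a b c d] by (simp add: zero_prod_def)
qed

section \<open>Solving the adjoint equation\<close>

definition radial_adjoint :: "real \<Rightarrow> (real \<times> real \<Rightarrow> real) \<Rightarrow> real \<times> real \<Rightarrow> real" where
  "radial_adjoint m f w = d2_r (d2_r f) w - 2 * m / fst w * d2_r f w + 2 * m / (fst w)\<^sup>2 * f w"

lemma kzk_adjoint_affine_in_t:
  assumes phi: "Cinf_on right_half \<phi>" and psi: "Cinf_on right_half \<psi>"
    and lam: "\<And>r z t. r > 0 \<Longrightarrow> lam (r, z, t) = \<phi> (r, z) + t * \<psi> (r, z)"
    and r: "r > 0"
  shows "kzk_adjoint c0 dl bt m lam q (r, z, t)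
    = c0 ^ 4 * (radial_adjoint m \<phi> (r, z) + t * radial_adjoint m \<psi> (r, z)) - 2 * c0 ^ 3 * d2_z \<psi> (r, z)"
proof -
  have in_half: "(s, z) \<in> right_half" if "s > 0" for s
    using that by simp
  have lr: "d_r lam (s, z, t) = d2_r \<phi> (s, z) + t * d2_r \<psi> (s, z)" if s: "s > 0" for s
  proof -
    have "d_r lam (s, z, t) = deriv (\<lambda>s'. \<phi> (s', z) + t * \<psi> (s', z)) s"
      unfolding d_r_def using eventually_pos_nhds[OF s] lam
      by (auto intro!: deriv_cong_ev elim!: eventually_mono)
    also have "\<dots> = d2_r \<phi> (s, z) + t * d2_r \<psi> (s, z)"
      by (rule DERIV_imp_deriv[OF DERIV_add[OF has_d2_r[OF phi in_half[OF s]]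
          DERIV_cmult[OF has_d2_r[OF psi in_half[OF s]]]]])
    finally show ?thesis .
  qed
  have lrr: "d_r (d_r lam) (r, z, t) = d2_r (d2_r \<phi>) (r, z) + t * d2_r (d2_r \<psi>) (r, z)"
  proof -
    have "d_r (d_r lam) (r, z, t) = deriv (\<lambda>s. d2_r \<phi> (s, z) + t * d2_r \<psi> (s, z)) r"
      unfolding d_r_def[of "d_r lam"] using eventually_pos_nhds[OF r] lr
      by (auto intro!: deriv_cong_ev elim!: eventually_mono)
    also have "\<dots> = d2_r (d2_r \<phi>) (r, z) + t * d2_r (d2_r \<psi>) (r, z)"
      by (rule DERIV_imp_deriv[OF DERIV_add[OF has_d2_r[OF Cinf_on_d2_r[OF phi] in_half[OF r]]
          DERIV_cmult[OF has_d2_r[OF Cinf_on_d2_r[OF psi] in_half[OF r]]]]])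
    finally show ?thesis .
  qed
  have lt: "d_t lam (r, z', t') = \<psi> (r, z')" for z' t'
  proof -
    have "d_t lam (r, z', t') = deriv (\<lambda>s. \<phi> (r, z') + s * \<psi> (r, z')) t'"
      using lam[OF r] by (simp add: d_t_def)
    also have "\<dots> = \<psi> (r, z')"
      by (intro DERIV_imp_deriv derivative_eq_intros) auto
    finally show ?thesis .
  qed
  have ltt: "d_t (d_t lam) (r, z, t') = 0" for t'
    by (simp add: d_t_def[of "d_t lam"] lt)
  have "d_t (d_t (d_t lam)) (r, z, t) = 0"
    by (simp add: d_t_def[of "d_t (d_t lam)"] ltt)
  moreover have "d_z (d_t lam) (r, z, t) = d2_z \<psi> (r, z)"
    by (simp add: d_z_def d2_z_def lt)
  ultimately show ?thesis
    using r by (simp add: kzk_adjoint_def radial_adjoint_def lam lr lrr ltt) (simp add: field_simps)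
qed

lemma Cinf_on_t_slice:
  fixes g :: "pt \<Rightarrow> real"
  shows "Cinf_on right_half g \<Longrightarrow> Cinf_on right_half (\<lambda>w. g (fst w, snd w, c))"
  using Cinf_on_pullback[where T = "\<lambda>w :: real \<times> real. (fst w, snd w, 0 :: real)" and c = "(0, 0, c :: real)"]
  by (force simp: Basis_prod_def zero_prod_def intro: continuous_intros)

lemma affine_in_t_if_d_t_d_t_zero:
  assumes lam: "Cinf_on right_half lam" and ltt: "\<And>s. d_t (d_t lam) (r, z, s) = 0" and r: "r > 0"
  shows "lam (r, z, t) = lam (r, z, 0) + t * d_t lam (r, z, 0)"
proof -
  have "(r, z, s) \<in> right_half" for s
    using r by simp
  note Dt = has_d_t[OF lam this] has_d_t[OF Cinf_on_d_t[OF lam] this]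
  have "d_t lam (r, z, s) = d_t lam (r, z, 0)" for s
    using DERIV_isconst_all[of "\<lambda>s. d_t lam (r, z, s)"] Dt(2) ltt by metis
  then have "\<forall>s. ((\<lambda>s. lam (r, z, s) - s * d_t lam (r, z, 0)) has_real_derivative 0) (at s)"
    using Dt(1) by (auto intro!: derivative_eq_intros)
  from DERIV_isconst_all[OF this, of t 0] show ?thesis
    by simp
qed

lemma kzk_adjoint_vanishes_iff:
  assumes c0_nz: "c0 \<noteq> 0" and bt_nz: "bt \<noteq> 0" and lam: "Cinf_on right_half lam"
    and Q: "q1 \<in> Q" "q2 \<in> Q" "q1 \<noteq> q2"
  shows "(\<forall>x q. fst x > 0 \<longrightarrow> q \<in> Q \<longrightarrow> kzk_adjoint c0 dl bt m lam q x = 0) \<longleftrightarrow>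
    (\<exists>\<phi> \<psi>. Cinf_on right_half \<phi> \<and> Cinf_on right_half \<psi> \<and>
      (\<forall>r z t. r > 0 \<longrightarrow> lam (r, z, t) = \<phi> (r, z) + t * \<psi> (r, z)) \<and>
      (\<forall>r z. r > 0 \<longrightarrow> radial_adjoint m \<phi> (r, z) = 2 / c0 * d2_z \<psi> (r, z)) \<and>
      (\<forall>r z. r > 0 \<longrightarrow> radial_adjoint m \<psi> (r, z) = 0))"
  (is "?vanish \<longleftrightarrow> (\<exists>\<phi> \<psi>. ?sol \<phi> \<psi>)")
proof
  assume vanish: ?vanish
  define \<phi> where "\<phi> = (\<lambda>w :: real \<times> real. lam (fst w, snd w, 0))"
  define \<psi> where "\<psi> = (\<lambda>w :: real \<times> real. d_t lam (fst w, snd w, 0))"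
  have ltt: "d_t (d_t lam) (r, z, t) = 0" if "r > 0" for r z t
  proof -
    have "kzk_adjoint c0 dl bt m lam q1 (r, z, t) - kzk_adjoint c0 dl bt m lam q2 (r, z, t) = 0"
      using vanish that Q by simp
    then have "bt * (q1 - q2) * d_t (d_t lam) (r, z, t) = 0"
      by (simp add: kzk_adjoint_def algebra_simps)
    with Q bt_nz show ?thesis
      by simp
  qed
  have affine: "lam (r, z, t) = \<phi> (r, z) + t * \<psi> (r, z)" if "r > 0" for r z t
    using affine_in_t_if_d_t_d_t_zero[OF lam ltt[OF that] that, where t = t] by (simp add: \<phi>_def \<psi>_def)
  have smooth: "Cinf_on right_half \<phi>" "Cinf_on right_half \<psi>"
    unfolding \<phi>_def \<psi>_def by (intro Cinf_on_t_slice Cinf_on_d_t lam)+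
  have "radial_adjoint m \<phi> (r, z) = 2 / c0 * d2_z \<psi> (r, z) \<and> radial_adjoint m \<psi> (r, z) = 0"
    if r: "r > 0" for r z
  proof -
    have "c0 ^ 4 * (radial_adjoint m \<phi> (r, z) + t * radial_adjoint m \<psi> (r, z)) - 2 * c0 ^ 3 * d2_z \<psi> (r, z) = 0"
      for t using vanish[rule_format, of "(r, z, t)" q1] Q r
        kzk_adjoint_affine_in_t[OF smooth affine r] by simp
    from this[of 0] this[of 1] c0_nz show ?thesis
      by (simp add: field_simps power3_eq_cube power4_eq_xxxx)
  qed
  with smooth affine show "\<exists>\<phi> \<psi>. ?sol \<phi> \<psi>"
    by blast
next
  assume "\<exists>\<phi> \<psi>. ?sol \<phi> \<psi>"
  then obtain \<phi> \<psi> where sol: "?sol \<phi> \<psi>"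
    by blast
  show ?vanish
  proof (intro allI impI)
    fix x :: pt and q
    assume "fst x > 0"
    then obtain r z t where x: "x = (r, z, t)" and r: "r > 0"
      by (cases x) auto
    show "kzk_adjoint c0 dl bt m lam q x = 0"
      using kzk_adjoint_affine_in_t[of \<phi> \<psi> lam] sol r c0_nz
      by (simp add: x power3_eq_cube power4_eq_xxxx)
  qed
qed

lemma Cinf_on_point_slice:
  fixes Lam :: "pt \<times> (real \<times> real \<times> real \<times> real) \<Rightarrow> real"
  assumes "Cinf_on {y. fst (fst y) > 0} Lam"
  shows "Cinf_on right_half (\<lambda>x. Lam (x, w))"
proof -
  have "Cinf_on {x. (0, w) + (x, 0) \<in> {y. fst (fst y) > 0}} (\<lambda>x :: pt. Lam ((0, w) + (x, 0)))"
    by (rule Cinf_on_pullback[OF _ _ _ assms]) (auto simp: Basis_prod_def zero_prod_def intro: continuous_intros)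
  then show ?thesis
    by simp
qed

lemma euler_point_dependent_multiplier:
  fixes Lam :: "pt \<times> (real \<times> real \<times> real \<times> real) \<Rightarrow> real"
  assumes F: "Cinf_on UNIV F" and Lam: "Cinf_on {y. fst (fst y) > 0} Lam"
    and point: "\<forall>x w. fst x > 0 \<longrightarrow> Lam (x, w) = Lam (x, 0)" and x: "fst x > 0"
  shows "euler (\<lambda>y v. Lam (y, jet1 v) * kzk c0 dl bt m F y v) x u
    = kzk_adjoint c0 dl bt m (\<lambda>y. Lam (y, 0)) (deriv F (u (0,0,0))) x"
proof -
  let ?E = "kzk c0 dl bt m F"
  have "agree_pos (\<lambda>y v. Lam (y, jet1 v) * ?E y v) (\<lambda>y v. Lam (y, 0) * ?E y v)"
    unfolding agree_pos_def
  proof (intro allI impI)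
    fix y :: pt and v :: jet
    assume "fst y > 0"
    from point[rule_format, OF this, of "jet1 v"]
    show "Lam (y, jet1 v) * ?E y v = Lam (y, 0) * ?E y v"
      by simp
  qed
  then have "agree_pos (euler (\<lambda>y v. Lam (y, jet1 v) * ?E y v)) (euler (\<lambda>y v. Lam (y, 0) * ?E y v))"
    by (intro agree_pos_euler[OF finite_lagrangian_jets] depends_on_mult depends_on_kzk)
      (auto simp: depends_on_def lagrangian_jets_def)
  from this[unfolded agree_pos_def, rule_format, OF x]
  show ?thesis
    using euler_point_multiplier[OF F Cinf_on_point_slice[OF Lam] x] by simp
qed

lemma is_multiplier_iff_adjoint:
  fixes Lam :: "pt \<times> (real \<times> real \<times> real \<times> real) \<Rightarrow> real"
  assumes F: "Cinf_on UNIV F" and c0_nz: "c0 \<noteq> 0" and dl_nz: "dl \<noteq> 0"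
    and Lam: "Cinf_on {y. fst (fst y) > 0} Lam"
  shows "is_multiplier c0 dl bt m F Lam \<longleftrightarrow>
    (\<forall>x w. fst x > 0 \<longrightarrow> Lam (x, w) = Lam (x, 0)) \<and>
    (\<forall>x q. fst x > 0 \<longrightarrow> q \<in> range (deriv F) \<longrightarrow> kzk_adjoint c0 dl bt m (\<lambda>y. Lam (y, 0)) q x = 0)"
    (is "_ \<longleftrightarrow> ?point \<and> ?adjoint")
proof
  assume mult: "is_multiplier c0 dl bt m F Lam"
  have point: ?point
    using multiplier_depends_only_on_point[OF F c0_nz dl_nz Lam mult] by blast
  moreover have ?adjoint
  proof (intro allI impI)
    fix x :: pt and q
    assume x: "fst x > 0" and "q \<in> range (deriv F)"
    then obtain p where "q = deriv F p"
      by blast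
    with euler_point_dependent_multiplier[OF F Lam point x, of c0 dl bt m "\<lambda>_. p"]
      euler_multiplier_eq_0[OF F mult x]
    show "kzk_adjoint c0 dl bt m (\<lambda>y. Lam (y, 0)) q x = 0"
      by simp
  qed
  ultimately show "?point \<and> ?adjoint" ..
next
  assume "?point \<and> ?adjoint"
  then show "is_multiplier c0 dl bt m F Lam"
    using euler_point_dependent_multiplier[OF F Lam]
    by (simp add: is_multiplier_def kzkE_eq_kzk[OF F])
qed

lemma deriv_values_distinct:
  assumes F: "Cinf_on UNIV F" and F2_nz: "\<forall>q. deriv (deriv F) q \<noteq> 0"
  shows "deriv F 0 \<noteq> deriv F 1"
proof
  assume eq: "deriv F 0 = deriv F 1"
  obtain q where "deriv F 1 - deriv F 0 = (1 - 0) * deriv (deriv F) q"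
    using MVT2[of 0 1 "deriv F" "deriv (deriv F)"] Cinf_on_derivs(2)[OF F] by force
  with eq F2_nz show False
    by simp
qed

lemma kzk_multiplier_iff:
  fixes Lam :: "pt \<times> (real \<times> real \<times> real \<times> real) \<Rightarrow> real"
  assumes F: "Cinf_on UNIV F" and F2_nz: "\<forall>q. deriv (deriv F) q \<noteq> 0"
    and c0_nz: "c0 \<noteq> 0" and dl_nz: "dl \<noteq> 0" and bt_nz: "bt \<noteq> 0"
    and Lam: "Cinf_on {y. fst (fst y) > 0} Lam"
  shows "is_multiplier c0 dl bt m F Lam \<longleftrightarrow>
    (\<exists>\<phi> \<psi>. Cinf_on right_half \<phi> \<and> Cinf_on right_half \<psi> \<and>
      (\<forall>r z t w. r > 0 \<longrightarrow> Lam ((r, z, t), w) = \<phi> (r, z) + t * \<psi> (r, z)) \<and>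
      (\<forall>r z. r > 0 \<longrightarrow> radial_adjoint m \<phi> (r, z) = 2 / c0 * d2_z \<psi> (r, z)) \<and>
      (\<forall>r z. r > 0 \<longrightarrow> radial_adjoint m \<psi> (r, z) = 0))"
proof -
  let ?affine = "\<lambda>\<phi> \<psi>. \<forall>r z t w. r > 0 \<longrightarrow> Lam ((r, z, t), w) = \<phi> (r, z) + t * \<psi> (r, z)"
  have affine_point: "Lam (x, w) = Lam (x, 0)" if "?affine \<phi> \<psi>" "fst x > 0" for \<phi> \<psi> x w
    using that by (cases x) (metis fst_conv)
  have point_affine: "?affine \<phi> \<psi>"
    if "\<forall>x w. fst x > 0 \<longrightarrow> Lam (x, w) = Lam (x, 0)"
      "\<forall>r z t. r > 0 \<longrightarrow> Lam ((r, z, t), 0) = \<phi> (r, z) + t * \<psi> (r, z)" for \<phi> \<psi>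
    using that by (metis fst_conv)
  show ?thesis
    unfolding is_multiplier_iff_adjoint[OF F c0_nz dl_nz Lam]
      kzk_adjoint_vanishes_iff[OF c0_nz bt_nz Cinf_on_point_slice[OF Lam] rangeI[of "deriv F" 0]
        rangeI[of "deriv F" 1] deriv_values_distinct[OF F F2_nz]]
  proof
    assume "(\<forall>x w. fst x > 0 \<longrightarrow> Lam (x, w) = Lam (x, 0)) \<and> (\<exists>\<phi> \<psi>. Cinf_on right_half \<phi> \<and>
      Cinf_on right_half \<psi> \<and> (\<forall>r z t. r > 0 \<longrightarrow> Lam ((r, z, t), 0) = \<phi> (r, z) + t * \<psi> (r, z)) \<and>
      (\<forall>r z. r > 0 \<longrightarrow> radial_adjoint m \<phi> (r, z) = 2 / c0 * d2_z \<psi> (r, z)) \<and>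
      (\<forall>r z. r > 0 \<longrightarrow> radial_adjoint m \<psi> (r, z) = 0))"
    then show "\<exists>\<phi> \<psi>. Cinf_on right_half \<phi> \<and> Cinf_on right_half \<psi> \<and> ?affine \<phi> \<psi> \<and>
      (\<forall>r z. r > 0 \<longrightarrow> radial_adjoint m \<phi> (r, z) = 2 / c0 * d2_z \<psi> (r, z)) \<and>
      (\<forall>r z. r > 0 \<longrightarrow> radial_adjoint m \<psi> (r, z) = 0)"
      using point_affine by blast
  next
    assume "\<exists>\<phi> \<psi>. Cinf_on right_half \<phi> \<and> Cinf_on right_half \<psi> \<and> ?affine \<phi> \<psi> \<and>
      (\<forall>r z. r > 0 \<longrightarrow> radial_adjoint m \<phi> (r, z) = 2 / c0 * d2_z \<psi> (r, z)) \<and>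
      (\<forall>r z. r > 0 \<longrightarrow> radial_adjoint m \<psi> (r, z) = 0)"
    then obtain \<phi> \<psi> where sol: "Cinf_on right_half \<phi>" "Cinf_on right_half \<psi>" "?affine \<phi> \<psi>"
      "\<forall>r z. r > 0 \<longrightarrow> radial_adjoint m \<phi> (r, z) = 2 / c0 * d2_z \<psi> (r, z)"
      "\<forall>r z. r > 0 \<longrightarrow> radial_adjoint m \<psi> (r, z) = 0"
      by blast
    then show "(\<forall>x w. fst x > 0 \<longrightarrow> Lam (x, w) = Lam (x, 0)) \<and> (\<exists>\<phi> \<psi>. Cinf_on right_half \<phi> \<and>
      Cinf_on right_half \<psi> \<and> (\<forall>r z t. r > 0 \<longrightarrow> Lam ((r, z, t), 0) = \<phi> (r, z) + t * \<psi> (r, z)) \<and>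
      (\<forall>r z. r > 0 \<longrightarrow> radial_adjoint m \<phi> (r, z) = 2 / c0 * d2_z \<psi> (r, z)) \<and>
      (\<forall>r z. r > 0 \<longrightarrow> radial_adjoint m \<psi> (r, z) = 0))"
      using affine_point[OF sol(3)] by blast
  qed
qed

section \<open>The conservation law\<close>

lemma MVT_abs:
  fixes f f' :: "real \<Rightarrow> real"
  assumes "\<And>x. (f has_real_derivative f' x) (at x)"
  shows "\<exists>\<xi>. \<bar>\<xi> - a\<bar> \<le> \<bar>h\<bar> \<and> f (a + h) - f a = h * f' \<xi>"
proof (cases h "0 :: real" rule: linorder_cases)
  case less
  then obtain \<xi> where "a + h < \<xi>" "\<xi> < a" "f a - f (a + h) = (a - (a + h)) * f' \<xi>"
    using MVT2[of "a + h" a f f'] assms by auto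
  then show ?thesis
    by (intro exI[of _ \<xi>]) (auto simp: algebra_simps)
next
  case greater
  then obtain \<xi> where "a < \<xi>" "\<xi> < a + h" "f (a + h) - f a = (a + h - a) * f' \<xi>"
    using MVT2[of a "a + h" f f'] assms by auto
  then show ?thesis
    by (intro exI[of _ \<xi>]) auto
qed (auto intro: exI[of _ a])

lemma second_difference_MVT:
  fixes f fz fzt :: "real \<Rightarrow> real \<Rightarrow> real"
  assumes fz: "\<And>z t. ((\<lambda>s. f s t) has_real_derivative fz z t) (at z)"
    and fzt: "\<And>z t. ((\<lambda>s. fz z s) has_real_derivative fzt z t) (at t)"
  shows "\<exists>\<xi> \<eta>. \<bar>\<xi> - z0\<bar> \<le> \<bar>h\<bar> \<and> \<bar>\<eta> - t0\<bar> \<le> \<bar>k\<bar> \<and>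
    (f (z0 + h) (t0 + k) - f (z0 + h) t0) - (f z0 (t0 + k) - f z0 t0) = (h * k) * fzt \<xi> \<eta>"
proof -
  obtain \<xi> where \<xi>: "\<bar>\<xi> - z0\<bar> \<le> \<bar>h\<bar>"
    "(f (z0 + h) (t0 + k) - f (z0 + h) t0) - (f z0 (t0 + k) - f z0 t0) = h * (fz \<xi> (t0 + k) - fz \<xi> t0)"
    using MVT_abs[of "\<lambda>s. f s (t0 + k) - f s t0", OF DERIV_diff[OF fz fz], of z0 h] by auto
  moreover obtain \<eta> where "\<bar>\<eta> - t0\<bar> \<le> \<bar>k\<bar>" "fz \<xi> (t0 + k) - fz \<xi> t0 = k * fzt \<xi> \<eta>"
    using MVT_abs[OF fzt[of \<xi>], of t0 k] by auto
  ultimately show ?thesis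
    by auto
qed

lemma mixed_partials_commute:
  fixes f fz ft fzt :: "real \<Rightarrow> real \<Rightarrow> real"
  assumes fz: "\<And>z t. ((\<lambda>s. f s t) has_real_derivative fz z t) (at z)"
    and ft: "\<And>z t. ((\<lambda>s. f z s) has_real_derivative ft z t) (at t)"
    and fzt: "\<And>z t. ((\<lambda>s. fz z s) has_real_derivative fzt z t) (at t)"
    and cont: "isCont (\<lambda>(z, t). fzt z t) (z0, t0)"
  shows "((\<lambda>s. ft s t0) has_real_derivative fzt z0 t0) (at z0)"
  unfolding DERIV_def LIM_eq
proof (intro allI impI)
  fix e :: real
  assume e: "e > 0"
  obtain d where d: "d > 0" and close: "\<And>y. dist y (z0, t0) < d \<Longrightarrow> \<bar>(\<lambda>(z, t). fzt z t) y - fzt z0 t0\<bar> < e / 2"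
    using cont e unfolding continuous_at_eps_delta by (metis dist_real_def half_gt_zero case_prod_conv)
  show "\<exists>s>0. \<forall>h. h \<noteq> 0 \<and> norm (h - 0) < s \<longrightarrow>
      norm ((ft (z0 + h) t0 - ft z0 t0) / h - fzt z0 t0) < e"
  proof (intro exI[of _ "d / 2"] conjI allI impI)
    fix h :: real
    assume h: "h \<noteq> 0 \<and> norm (h - 0) < d / 2"
    define Q where "Q k = ((f (z0 + h) (t0 + k) - f (z0 + h) t0) / k - (f z0 (t0 + k) - f z0 t0) / k) / h" for k
    have "(Q \<longlongrightarrow> (ft (z0 + h) t0 - ft z0 t0) / h) (at 0)"
      using ft[of "z0 + h" t0] ft[of z0 t0] h unfolding Q_def DERIV_def
      by (intro tendsto_intros) auto
    moreover have "\<bar>Q k - fzt z0 t0\<bar> \<le> e / 2" if k: "k \<noteq> 0" "\<bar>k\<bar> < d / 2" for k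
    proof -
      obtain \<xi> \<eta> where \<xi>: "\<bar>\<xi> - z0\<bar> \<le> \<bar>h\<bar>" and \<eta>: "\<bar>\<eta> - t0\<bar> \<le> \<bar>k\<bar>"
        and second_difference: "(f (z0 + h) (t0 + k) - f (z0 + h) t0) - (f z0 (t0 + k) - f z0 t0)
          = (h * k) * fzt \<xi> \<eta>"
        using second_difference_MVT[OF fz fzt] by blast
      have "Q k = ((f (z0 + h) (t0 + k) - f (z0 + h) t0) - (f z0 (t0 + k) - f z0 t0)) / (h * k)"
        unfolding Q_def using h k(1) by (simp add: field_simps)
      then have "Q k = fzt \<xi> \<eta>"
        unfolding second_difference using h k(1) by simp
      moreover have "dist (\<xi>, \<eta>) (z0, t0) \<le> dist (\<xi>, \<eta>) (z0, \<eta>) + dist (z0, \<eta>) (z0, t0)"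
        by (rule dist_triangle)
      then have "dist (\<xi>, \<eta>) (z0, t0) < d"
        using \<xi> \<eta> h k(2) by (simp add: dist_Pair_Pair dist_real_def)
      ultimately show ?thesis
        using close[of "(\<xi>, \<eta>)"] by simp
    qed
    then have "eventually (\<lambda>k. \<bar>Q k - fzt z0 t0\<bar> \<le> e / 2) (at 0)"
      unfolding eventually_at using d by (intro exI[of _ "d / 2"]) (auto simp: dist_real_def)
    ultimately have "\<bar>(ft (z0 + h) t0 - ft z0 t0) / h - fzt z0 t0\<bar> \<le> e / 2"
      by (intro tendsto_upperbound[of "\<lambda>k. \<bar>Q k - fzt z0 t0\<bar>"]) (auto intro!: tendsto_intros)
    with e show "norm ((ft (z0 + h) t0 - ft z0 t0) / h - fzt z0 t0) < e"
      by simp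
  qed (use d in simp)
qed

lemma d_z_d_t_commute:
  assumes p: "Cinf_on right_half p" and r: "r > 0"
  shows "d_z (d_t p) (r, z, t) = d_t (d_z p) (r, z, t)"
proof -
  have in_half: "(r, z', t') \<in> right_half" for z' t'
    using r by simp
  have "isCont (\<lambda>(z', t'). d_t (d_z p) (r, z', t')) (z, t)"
  proof -
    have "continuous_on right_half (d_t (d_z p))"
      by (intro Cinf_on_continuous Cinf_on_d_t Cinf_on_d_z p)
    then have "isCont (d_t (d_z p)) (r, z, t)"
      using r by (auto simp: continuous_on_eq_continuous_at open_Collect_less intro: continuous_intros)
    then show ?thesis
      using isCont_o2[where f = "\<lambda>w. (r, w)" and a = "(z, t)" and g = "d_t (d_z p)"] by (simp add: case_prod_unfold)
  qed
  from mixed_partials_commute[where f = "\<lambda>z' t'. p (r, z', t')", OF has_d_z[OF p in_half]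
      has_d_t[OF p in_half] has_d_t[OF Cinf_on_d_z[OF p] in_half] this]
  show ?thesis
    by (simp add: d_z_def DERIV_imp_deriv)
qed

definition kzk_flux_t :: "real \<Rightarrow> real \<Rightarrow> real \<Rightarrow> (real \<Rightarrow> real) \<Rightarrow> (real \<times> real \<Rightarrow> real) \<Rightarrow>
    (real \<times> real \<Rightarrow> real) \<Rightarrow> (pt \<Rightarrow> real) \<Rightarrow> pt \<Rightarrow> real" where
  "kzk_flux_t c0 dl bt F \<phi> \<psi> p = (\<lambda>(r, z, t). (\<phi> (r, z) + t * \<psi> (r, z)) *
                   (dl * d_t (d_t p) (r, z, t) + bt * deriv F (p (r, z, t)) * d_t p (r, z, t)
                    - 2 * c0 ^ 3 * d_z p (r, z, t))
                 - \<psi> (r, z) * (dl * d_t p (r, z, t) + bt * F (p (r, z, t))))"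

definition kzk_flux_r :: "real \<Rightarrow> real \<Rightarrow> (real \<times> real \<Rightarrow> real) \<Rightarrow> (real \<times> real \<Rightarrow> real) \<Rightarrow>
    (pt \<Rightarrow> real) \<Rightarrow> pt \<Rightarrow> real" where
  "kzk_flux_r c0 m \<phi> \<psi> p = (\<lambda>(r, z, t). c0 ^ 4 * ((\<phi> (r, z) + t * \<psi> (r, z)) *
                   (d_r p (r, z, t) + 2 * m * p (r, z, t) / r)
                 - p (r, z, t) * (d2_r \<phi> (r, z) + t * d2_r \<psi> (r, z))))"

definition kzk_flux_z :: "real \<Rightarrow> (real \<times> real \<Rightarrow> real) \<Rightarrow> (pt \<Rightarrow> real) \<Rightarrow> pt \<Rightarrow> real" where
  "kzk_flux_z c0 \<psi> p = (\<lambda>(r, z, t). 2 * c0 ^ 3 * p (r, z, t) * \<psi> (r, z))"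

lemma d_t_d_t_comp:
  assumes F: "Cinf_on UNIV F" and p: "Cinf_on right_half p" and r: "r > 0"
  shows "d_t (d_t (\<lambda>x. F (p x))) (r, z, t) = deriv (deriv F) (p (r, z, t)) * (d_t p (r, z, t))\<^sup>2
    + deriv F (p (r, z, t)) * d_t (d_t p) (r, z, t)"
proof -
  have in_half: "(r, z, s) \<in> right_half" for s
    using r by simp
  note Pt = has_d_t[OF p in_half] and F' = Cinf_on_derivs[OF F]
  have "d_t (\<lambda>x. F (p x)) (r, z, s) = deriv F (p (r, z, s)) * d_t p (r, z, s)" for s
    by (simp add: d_t_def[of "\<lambda>x. F (p x)"] DERIV_imp_deriv[OF DERIV_chain2[OF F'(1) Pt]])
  then have "d_t (d_t (\<lambda>x. F (p x))) (r, z, t) = deriv (\<lambda>s. deriv F (p (r, z, s)) * d_t p (r, z, s)) t"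
    by (simp add: d_t_def[of "d_t (\<lambda>x. F (p x))"])
  also have "\<dots> = deriv (deriv F) (p (r, z, t)) * (d_t p (r, z, t))\<^sup>2
      + deriv F (p (r, z, t)) * d_t (d_t p) (r, z, t)"
    by (rule DERIV_imp_deriv) (rule derivative_eq_intros DERIV_chain2[OF F'(2) Pt]
        has_d_t[OF Cinf_on_d_t[OF p] in_half] refl | simp add: power2_eq_square)+
  finally show ?thesis .
qed

lemma d_t_kzk_flux_t:
  assumes F: "Cinf_on UNIV F" and p: "Cinf_on right_half p" and r: "r > 0"
  shows "d_t (kzk_flux_t c0 dl bt F \<phi> \<psi> p) (r, z, t)
     = (\<phi> (r, z) + t * \<psi> (r, z)) * (dl * d_t (d_t (d_t p)) (r, z, t)
          + bt * (deriv (deriv F) (p (r, z, t)) * (d_t p (r, z, t))\<^sup>2 + deriv F (p (r, z, t)) * d_t (d_t p) (r, z, t))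
          - 2 * c0 ^ 3 * d_t (d_z p) (r, z, t))
       - 2 * c0 ^ 3 * \<psi> (r, z) * d_z p (r, z, t)"
proof -
  have in_half: "(r, z, s) \<in> right_half" for s
    using r by simp
  note F' = Cinf_on_derivs[OF F] and Pt = has_d_t[OF p in_half]
  note D = DERIV_chain2[OF F'(1) Pt] DERIV_chain2[OF F'(2) Pt] Pt has_d_t[OF Cinf_on_d_t[OF p] in_half]
    has_d_t[OF Cinf_on_d_t[OF Cinf_on_d_t[OF p]] in_half] has_d_t[OF Cinf_on_d_z[OF p] in_half]
  show ?thesis
    unfolding d_t_def[of "kzk_flux_t c0 dl bt F \<phi> \<psi> p"]
    unfolding kzk_flux_t_def
    by (simp, rule DERIV_imp_deriv, (rule derivative_eq_intros D refl | simp)+)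
      (simp add: algebra_simps power2_eq_square)
qed

lemma d_r_kzk_flux_r:
  assumes phi: "Cinf_on right_half \<phi>" and psi: "Cinf_on right_half \<psi>" and p: "Cinf_on right_half p"
    and r: "r > 0"
  shows "d_r (kzk_flux_r c0 m \<phi> \<psi> p) (r, z, t) = c0 ^ 4 * ((d2_r \<phi> (r, z) + t * d2_r \<psi> (r, z))
        * (d_r p (r, z, t) + 2 * m * p (r, z, t) / r)
      + (\<phi> (r, z) + t * \<psi> (r, z)) * (d_r (d_r p) (r, z, t) + 2 * m * d_r p (r, z, t) / r - 2 * m * p (r, z, t) / r\<^sup>2)
      - d_r p (r, z, t) * (d2_r \<phi> (r, z) + t * d2_r \<psi> (r, z))
      - p (r, z, t) * (d2_r (d2_r \<phi>) (r, z) + t * d2_r (d2_r \<psi>) (r, z)))"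
proof -
  have rne: "r \<noteq> 0" and in_half: "(r, z, t) \<in> right_half" "(r, z) \<in> right_half"
    using r by simp_all
  note D = has_d_r[OF p in_half(1)] has_d_r[OF Cinf_on_d_r[OF p] in_half(1)]
    has_d2_r[OF phi in_half(2)] has_d2_r[OF psi in_half(2)]
    has_d2_r[OF Cinf_on_d2_r[OF phi] in_half(2)] has_d2_r[OF Cinf_on_d2_r[OF psi] in_half(2)]
  have "d_r (kzk_flux_r c0 m \<phi> \<psi> p) (r, z, t) = deriv (\<lambda>s. kzk_flux_r c0 m \<phi> \<psi> p (s, z, t)) r"
    by (simp add: d_r_def)
  also have "\<dots> = c0 ^ 4 * ((d2_r \<phi> (r, z) + t * d2_r \<psi> (r, z))
        * (d_r p (r, z, t) + 2 * m * p (r, z, t) / r)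
      + (\<phi> (r, z) + t * \<psi> (r, z)) * (d_r (d_r p) (r, z, t) + 2 * m * d_r p (r, z, t) / r - 2 * m * p (r, z, t) / r\<^sup>2)
      - d_r p (r, z, t) * (d2_r \<phi> (r, z) + t * d2_r \<psi> (r, z))
      - p (r, z, t) * (d2_r (d2_r \<phi>) (r, z) + t * d2_r (d2_r \<psi>) (r, z)))"
    unfolding kzk_flux_r_def
    by (simp, rule DERIV_imp_deriv, (rule derivative_eq_intros D refl | simp add: rne)+)
      (simp add: rne field_simps power2_eq_square)
  finally show ?thesis .
qed

lemma d_z_kzk_flux_z:
  assumes psi: "Cinf_on right_half \<psi>" and p: "Cinf_on right_half p" and r: "r > 0"
  shows "d_z (kzk_flux_z c0 \<psi> p) (r, z, t)
    = 2 * c0 ^ 3 * (d_z p (r, z, t) * \<psi> (r, z) + p (r, z, t) * d2_z \<psi> (r, z))"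
proof -
  have in_half: "(r, z, t) \<in> right_half" "(r, z) \<in> right_half"
    using r by simp_all
  show ?thesis
    unfolding d_z_def[of "kzk_flux_z c0 \<psi> p"]
    unfolding kzk_flux_z_def
    by (simp, rule DERIV_imp_deriv, (rule derivative_eq_intros has_d_z[OF p in_half(1)]
        has_d2_z[OF psi in_half(2)] refl | simp)+) (simp add: algebra_simps)
qed

lemma kzk_conservation_law:
  assumes c0_nz: "c0 \<noteq> 0" and F: "Cinf_on UNIV F"
    and phi: "Cinf_on right_half \<phi>" and psi: "Cinf_on right_half \<psi>"
    and ode_phi: "radial_adjoint m \<phi> (r, z) = 2 / c0 * d2_z \<psi> (r, z)"
    and ode_psi: "radial_adjoint m \<psi> (r, z) = 0"
    and p: "Cinf_on right_half p"
    and pde: "c0 ^ 4 * (d_r (d_r p) (r, z, t) + 2 * m * d_r p (r, z, t) / r)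
          + dl * d_t (d_t (d_t p)) (r, z, t) + bt * d_t (d_t (\<lambda>x. F (p x))) (r, z, t)
          - 2 * c0 ^ 3 * d_z (d_t p) (r, z, t) = 0"
    and r: "r > 0"
  shows "d_t (kzk_flux_t c0 dl bt F \<phi> \<psi> p) (r, z, t) + d_r (kzk_flux_r c0 m \<phi> \<psi> p) (r, z, t)
    + d_z (kzk_flux_z c0 \<psi> p) (r, z, t) = 0"
proof -
  have "d_t (kzk_flux_t c0 dl bt F \<phi> \<psi> p) (r, z, t) + d_r (kzk_flux_r c0 m \<phi> \<psi> p) (r, z, t)
      + d_z (kzk_flux_z c0 \<psi> p) (r, z, t)
    = (\<phi> (r, z) + t * \<psi> (r, z)) * (c0 ^ 4 * (d_r (d_r p) (r, z, t) + 2 * m * d_r p (r, z, t) / r)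
          + dl * d_t (d_t (d_t p)) (r, z, t) + bt * d_t (d_t (\<lambda>x. F (p x))) (r, z, t)
          - 2 * c0 ^ 3 * d_z (d_t p) (r, z, t))
      - c0 ^ 4 * p (r, z, t) * (radial_adjoint m \<phi> (r, z) + t * radial_adjoint m \<psi> (r, z))
      + 2 * c0 ^ 3 * p (r, z, t) * d2_z \<psi> (r, z)"
    unfolding d_t_kzk_flux_t[OF F p r] d_r_kzk_flux_r[OF phi psi p r] d_z_kzk_flux_z[OF psi p r]
      d_t_d_t_comp[OF F p r] d_z_d_t_commute[OF p r] radial_adjoint_def
    using r by (simp add: field_simps power2_eq_square)
  also have "\<dots> = 0"
    using pde ode_phi ode_psi c0_nz by (simp add: power3_eq_cube power4_eq_xxxx field_simps)
  finally show ?thesis .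
qed

theorem mainTheorem4:
  fixes c0 dl bt m :: real and F :: "real \<Rightarrow> real"
  assumes c0_pos: "c0 > 0" and dl_pos: "dl > 0" and bt_pos: "bt > 0"
    and F_smooth: "Cinf_on UNIV F"
    and F2_nz: "\<forall>q. deriv (deriv F) q \<noteq> 0"
  shows
   "(\<forall>Lam :: pt \<times> (real \<times> real \<times> real \<times> real) \<Rightarrow> real.
       Cinf_on {y. fst (fst y) > 0} Lam \<longrightarrow>
       (is_multiplier c0 dl bt m F Lam \<longleftrightarrow>
         (\<exists>\<phi> \<psi> :: real \<times> real \<Rightarrow> real.
            Cinf_on {w. fst w > 0} \<phi> \<and> Cinf_on {w. fst w > 0} \<psi> \<and>
            (\<forall>r z t w. r > 0 \<longrightarrow> Lam ((r, z, t), w) = \<phi> (r, z) + t * \<psi> (r, z)) \<and>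
            (\<forall>r z. r > 0 \<longrightarrow>
               d2_r (d2_r \<phi>) (r, z) - 2 * m / r * d2_r \<phi> (r, z) + 2 * m / r ^ 2 * \<phi> (r, z)
                 = 2 / c0 * d2_z \<psi> (r, z)) \<and>
            (\<forall>r z. r > 0 \<longrightarrow>
               d2_r (d2_r \<psi>) (r, z) - 2 * m / r * d2_r \<psi> (r, z) + 2 * m / r ^ 2 * \<psi> (r, z)
                 = 0))))
    \<and>
    (\<forall>(\<phi> :: real \<times> real \<Rightarrow> real) (\<psi> :: real \<times> real \<Rightarrow> real) (p :: pt \<Rightarrow> real).
       Cinf_on {w. fst w > 0} \<phi> \<and> Cinf_on {w. fst w > 0} \<psi> \<and>
       (\<forall>r z. r > 0 \<longrightarrow>
          d2_r (d2_r \<phi>) (r, z) - 2 * m / r * d2_r \<phi> (r, z) + 2 * m / r ^ 2 * \<phi> (r, z)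
            = 2 / c0 * d2_z \<psi> (r, z)) \<and>
       (\<forall>r z. r > 0 \<longrightarrow>
          d2_r (d2_r \<psi>) (r, z) - 2 * m / r * d2_r \<psi> (r, z) + 2 * m / r ^ 2 * \<psi> (r, z) = 0) \<and>
       Cinf_on {x. fst x > 0} p \<and>
       (\<forall>r z t. r > 0 \<longrightarrow>
          c0 ^ 4 * (d_r (d_r p) (r, z, t) + 2 * m * d_r p (r, z, t) / r)
          + dl * d_t (d_t (d_t p)) (r, z, t)
          + bt * d_t (d_t (\<lambda>x. F (p x))) (r, z, t)
          - 2 * c0 ^ 3 * d_z (d_t p) (r, z, t) = 0)
     \<longrightarrow>
       (let Tt = (\<lambda>(r, z, t). (\<phi> (r, z) + t * \<psi> (r, z)) *
                   (dl * d_t (d_t p) (r, z, t) + bt * deriv F (p (r, z, t)) * d_t p (r, z, t)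
                    - 2 * c0 ^ 3 * d_z p (r, z, t))
                 - \<psi> (r, z) * (dl * d_t p (r, z, t) + bt * F (p (r, z, t))));
            Tr = (\<lambda>(r, z, t). c0 ^ 4 * ((\<phi> (r, z) + t * \<psi> (r, z)) *
                   (d_r p (r, z, t) + 2 * m * p (r, z, t) / r)
                 - p (r, z, t) * (d2_r \<phi> (r, z) + t * d2_r \<psi> (r, z))));
            Tz = (\<lambda>(r, z, t). 2 * c0 ^ 3 * p (r, z, t) * \<psi> (r, z))
        in \<forall>r z t. r > 0 \<longrightarrow> d_t Tt (r, z, t) + d_r Tr (r, z, t) + d_z Tz (r, z, t) = 0))"
proof -
  have c0_nz: "c0 \<noteq> 0" and dl_nz: "dl \<noteq> 0" and bt_nz: "bt \<noteq> 0"
    using c0_pos dl_pos bt_pos by simp_all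
  note multipliers = kzk_multiplier_iff[OF F_smooth F2_nz c0_nz dl_nz bt_nz,
      unfolded radial_adjoint_def fst_conv]
  note conservation = kzk_conservation_law[OF c0_nz F_smooth,
      unfolded radial_adjoint_def fst_conv kzk_flux_t_def kzk_flux_r_def kzk_flux_z_def]
  show ?thesis
    unfolding Let_def by (intro conjI allI impI multipliers) (auto intro!: conservation)
qed

end
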